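(* Let $0<\varepsilon<1$ and $C\ge1$. Let $V_1,\dots,V_5$ be probability spaces, with indices taken mod $5$. For each $i$, let $f_{i,i+1},g_{i,i+1}\colon V_i\times V_{i+1}\to[0,\infty)$ be measurable with $0\le g_{i,i+1}\le1$ pointwise and $\|f_{i,i+1}-g_{i,i+1}\|_\square\le\varepsilon^4$, and suppose that for each $i$, $$\|f_{i-1,i}\circ f_{i,i+1}\|_2^2\le C.$$ Then $$\mathbb E_{x_1,\dots,x_5}\prod_{i=1}^5 f_{i,i+1}(x_i,x_{i+1})\ \ge\ \mathbb E_{x_1,\dots,x_5}\prod_{i=1}^5 g_{i,i+1}(x_i,x_{i+1})-11C\varepsilon.$$
   Context: Here $x_i$ ranges over $V_i$ independently according to its probability measure. The convention $f_{ji}(x_j,x_i)=f_{ij}(x_i,x_j)$ (and likewise for $g$) is used, so e.g. $f_{i-1,i}$ is regarded as a function on $V_{i-1}\times V_i$. For $h_{12}\colon V_1\times V_2\to\mathbb R$ and $h_{23}\colon V_2\times V_3\to\mathbb R$, the composition $h_{12}\circ h_{23}\colon V_1\times V_3\to\mathbb R$ is $(h_{12}\circ h_{23})(x_1,x_3)=\mathbb E_{x_2\in V_2}h_{12}(x_1,x_2)h_{23}(x_2,x_3)$; $\|\cdot\|_2$ is the $L^2$ norm on $V_{i-1}\times V_{i+1}$ with the product probability measure. The cut norm of $h\colon V\times W\to\mathbb R$ is $\|h\|_\square=\sup_{A\subseteq V,B\subseteq W}|\mathbb E_{x\in V,y\in W}h(x,y)1_A(x)1_B(y)|$ over measurable $A,B$.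 *)

theory Defs
  imports "HOL-Probability.Probability"
begin

definition rect_integral ::
  "'a measure \<Rightarrow> 'b measure \<Rightarrow> ('a \<Rightarrow> 'b \<Rightarrow> real) \<Rightarrow> 'a set \<Rightarrow> 'b set \<Rightarrow> ereal" where
  "rect_integral M N h A B =
     enn2ereal (\<integral>\<^sup>+ z. ennreal (h (fst z) (snd z) * indicator A (fst z) * indicator B (snd z)) \<partial>(M \<Otimes>\<^sub>M N))
   - enn2ereal (\<integral>\<^sup>+ z. ennreal (- (h (fst z) (snd z) * indicator A (fst z) * indicator B (snd z))) \<partial>(M \<Otimes>\<^sub>M N))"

definition cut_norm ::
  "'a measure \<Rightarrow> 'b measure \<Rightarrow> ('a \<Rightarrow> 'b \<Rightarrow> real) \<Rightarrow> ereal" where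
  "cut_norm M N h = (SUP AB \<in> sets M \<times> sets N. \<bar>rect_integral M N h (fst AB) (snd AB)\<bar>)"

definition comp_sq_norm ::
  "'a measure \<Rightarrow> 'b measure \<Rightarrow> 'c measure \<Rightarrow> ('a \<Rightarrow> 'b \<Rightarrow> real) \<Rightarrow> ('b \<Rightarrow> 'c \<Rightarrow> real) \<Rightarrow> ennreal" where
  "comp_sq_norm M1 M2 M3 h1 h2 =
     (\<integral>\<^sup>+ xz. (\<integral>\<^sup>+ y. ennreal (h1 (fst xz) y * h2 y (snd xz)) \<partial>M2)\<^sup>2 \<partial>(M1 \<Otimes>\<^sub>M M3))"

definition good_pair ::
  "'a measure \<Rightarrow> 'b measure \<Rightarrow> ('a \<Rightarrow> 'b \<Rightarrow> real) \<Rightarrow> ('a \<Rightarrow> 'b \<Rightarrow> real) \<Rightarrow> real \<Rightarrow> bool" where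
  "good_pair M N f g \<epsilon> \<longleftrightarrow>
     case_prod f \<in> borel_measurable (M \<Otimes>\<^sub>M N) \<and> case_prod g \<in> borel_measurable (M \<Otimes>\<^sub>M N) \<and>
     (\<forall>x\<in>space M. \<forall>y\<in>space N. 0 \<le> f x y \<and> 0 \<le> g x y \<and> g x y \<le> 1) \<and>
     cut_norm M N (\<lambda>x y. f x y - g x y) \<le> ereal (\<epsilon> ^ 4)"

end

theory Submission
  imports Defs
begin

(*
  The g-edges are replaced by f-edges one at a time.  For a single edge (v, w), the rest of
  the cycle is grouped into weights a(y, v) and c(y, w), where y is the vertex opposite to the
  edge.  Truncating a and c at levels alpha and gamma, the layer-cake formula writes the
  truncated weighted edge integral as an average of rectangle integrals, so replacing g by f
  there costs at most alpha gamma eps^4 by the cut-norm hypothesis; what the truncation cuts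
  off is controlled by the L2 bounds on the compositions f_{i-1,i} o f_{i,i+1}.  For this to
  work on all five edges, the vertices x4 at which the compositions f45 o f51 and f23 o f34
  have large L2 rows, and the vertices x5 at which f51 has a heavy row, are discarded first:
  by Markov's inequality they have measure O(C eps), and on the remaining vertices every
  replacement costs O(C eps).
*)

section \<open>Nonnegative integrals\<close>

lemma good_pairD:
  assumes "good_pair M N f g e"
  shows "case_prod f \<in> borel_measurable (M \<Otimes>\<^sub>M N)" "case_prod g \<in> borel_measurable (M \<Otimes>\<^sub>M N)"
    and "x \<in> space M \<Longrightarrow> y \<in> space N \<Longrightarrow> 0 \<le> f x y"
    and "x \<in> space M \<Longrightarrow> y \<in> space N \<Longrightarrow> 0 \<le> g x y"
    and "x \<in> space M \<Longrightarrow> y \<in> space N \<Longrightarrow> g x y \<le> 1"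
  using assms unfolding good_pair_def by auto

lemma nn_integral_swap:
  assumes "sigma_finite_measure M" "sigma_finite_measure N"
    and "case_prod f \<in> borel_measurable (M \<Otimes>\<^sub>M N)"
  shows "(\<integral>\<^sup>+x. \<integral>\<^sup>+y. f x y \<partial>N \<partial>M) = (\<integral>\<^sup>+y. \<integral>\<^sup>+x. f x y \<partial>M \<partial>N)"
proof -
  interpret pair_sigma_finite M N
    using assms(1,2) by (simp add: pair_sigma_finite_def)
  show ?thesis
    using Fubini'[OF assms(3)] by simp
qed

lemma (in prob_space) nn_integral_add_const:
  "u \<in> borel_measurable M \<Longrightarrow> (\<integral>\<^sup>+x. u x + c \<partial>M) = (\<integral>\<^sup>+x. u x \<partial>M) + c"
  by (simp add: nn_integral_add emeasure_space_1)

lemma (in prob_space) nn_integral_add_indicator_const: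
  assumes [measurable]: "u \<in> borel_measurable M" "A \<in> sets M"
  shows "(\<integral>\<^sup>+x. u x + indicator A x + c \<partial>M) = (\<integral>\<^sup>+x. u x \<partial>M) + emeasure M A + c"
proof -
  have "(\<integral>\<^sup>+x. u x + indicator A x + c \<partial>M) = (\<integral>\<^sup>+x. u x + indicator A x \<partial>M) + c"
    by (intro nn_integral_add_const) measurable
  also have "(\<integral>\<^sup>+x. u x + indicator A x \<partial>M) = (\<integral>\<^sup>+x. u x \<partial>M) + emeasure M A"
    by (simp add: nn_integral_add)
  finally show ?thesis .
qed

lemma nn_integral_add3:
  "f \<in> borel_measurable M \<Longrightarrow> g \<in> borel_measurable M \<Longrightarrow> h \<in> borel_measurable M \<Longrightarrow>
    (\<integral>\<^sup>+x. f x + g x + h x \<partial>M) = integral\<^sup>N M f + integral\<^sup>N M g + integral\<^sup>N M h"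
  by (simp add: nn_integral_add)

lemma (in prob_space) nn_integral_le_one:
  "(\<And>x. x \<in> space M \<Longrightarrow> u x \<le> 1) \<Longrightarrow> (\<integral>\<^sup>+x. u x \<partial>M) \<le> 1"
  using nn_integral_mono[of M u "\<lambda>_. 1"] by (simp add: emeasure_space_1)

lemma nn_integral_minus_const_eq_0:
  assumes "\<And>x. x \<in> space M \<Longrightarrow> u x \<le> ennreal c"
  shows "(\<integral>\<^sup>+x. u x - ennreal c \<partial>M) = 0"
proof -
  have "(\<integral>\<^sup>+x. u x - ennreal c \<partial>M) = (\<integral>\<^sup>+x. 0 \<partial>M)"
    using assms by (intro nn_integral_cong) (meson diff_eq_0_ennreal ennreal_less_top order.strict_trans1)
  then show ?thesis
    by simp
qed

lemma ennreal_minus_le_sq: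
  assumes "0 < T"
  shows "x - ennreal T \<le> x\<^sup>2 * ennreal (1 / (4 * T))"
proof (cases x)
  case (real t)
  have "4 * T * (t - T) \<le> t\<^sup>2"
    using zero_le_power2[of "t - 2 * T"] by (simp add: power2_eq_square algebra_simps)
  then have "t - T \<le> t\<^sup>2 * (1 / (4 * T))"
    using assms by (simp add: field_simps)
  then show ?thesis
    using real assms by (simp add: ennreal_minus ennreal_power ennreal_mult[symmetric] ennreal_leI)
qed (use assms in \<open>simp add: ennreal_mult_top\<close>)

lemma nn_integral_minus_const_le_sq:
  assumes "0 < T" "Q \<in> borel_measurable M" "\<And>x. x \<in> space M \<Longrightarrow> u x \<le> Q x"
  shows "(\<integral>\<^sup>+x. u x - ennreal T \<partial>M) \<le> (\<integral>\<^sup>+x. (Q x)\<^sup>2 \<partial>M) * ennreal (1 / (4 * T))"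
proof -
  have "(\<integral>\<^sup>+x. u x - ennreal T \<partial>M) \<le> (\<integral>\<^sup>+x. (Q x)\<^sup>2 * ennreal (1 / (4 * T)) \<partial>M)"
    using assms by (intro nn_integral_mono order.trans[OF ennreal_minus_mono ennreal_minus_le_sq]) auto
  also have "\<dots> = (\<integral>\<^sup>+x. (Q x)\<^sup>2 \<partial>M) * ennreal (1 / (4 * T))"
    using assms(2) by (intro nn_integral_multc) measurable
  finally show ?thesis .
qed

lemma ennreal_le_of_sq_le:
  fixes x y :: ennreal
  assumes "x\<^sup>2 \<le> y\<^sup>2"
  shows "x \<le> y"
proof (rule ccontr)
  assume "\<not> x \<le> y"
  then have "y\<^sup>2 < x\<^sup>2"
    by (cases x; cases y) (auto simp: ennreal_power ennreal_less_iff power_strict_mono)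
  with assms show False
    by simp
qed

lemma (in prob_space) nn_integral_le_sqrt:
  assumes "u \<in> borel_measurable M" "(\<integral>\<^sup>+x. (u x)\<^sup>2 \<partial>M) \<le> ennreal c" "0 \<le> c"
  shows "(\<integral>\<^sup>+x. u x \<partial>M) \<le> ennreal (sqrt c)"
proof (rule ennreal_le_of_sq_le)
  have "(\<integral>\<^sup>+x. u x \<partial>M)\<^sup>2 \<le> (\<integral>\<^sup>+x. (u x)\<^sup>2 \<partial>M)"
    using Cauchy_Schwarz_nn_integral[of u M "\<lambda>_. 1"] assms(1) by (simp add: emeasure_space_1)
  also have "\<dots> \<le> (ennreal (sqrt c))\<^sup>2"
    using assms(2,3) by (simp add: ennreal_power)
  finally show "(\<integral>\<^sup>+x. u x \<partial>M)\<^sup>2 \<le> (ennreal (sqrt c))\<^sup>2" .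
qed

lemma emeasure_exceeds_inverse_le:
  assumes "0 < e" and [measurable]: "u \<in> borel_measurable M"
  shows "emeasure M {x \<in> space M. \<not> u x \<le> ennreal (1 / e)} \<le> ennreal e * (\<integral>\<^sup>+x. u x \<partial>M)"
proof -
  have "1 \<le> ennreal e * u x" if "\<not> u x \<le> ennreal (1 / e)" for x
  proof (cases "u x")
    case (real t)
    with that assms(1) have "1 < e * t"
      by (auto simp: not_le ennreal_less_iff field_simps)
    with real assms(1) show ?thesis
      by (simp add: ennreal_mult''[symmetric] ennreal_1[symmetric] del: ennreal_1)
  qed (use assms(1) in \<open>simp add: ennreal_mult_top\<close>)
  then have "emeasure M {x \<in> space M. \<not> u x \<le> ennreal (1 / e)}
      \<le> emeasure M {x \<in> space M. 1 \<le> ennreal e * u x}"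
    by (intro emeasure_mono) auto
  also have "\<dots> \<le> ennreal e * (\<integral>\<^sup>+x. u x * indicator (space M) x \<partial>M)"
    by (intro nn_integral_Markov_inequality) measurable
  also have "(\<integral>\<^sup>+x. u x * indicator (space M) x \<partial>M) = (\<integral>\<^sup>+x. u x \<partial>M)"
    by (intro nn_integral_cong) simp
  finally show ?thesis .
qed

lemma ennreal_min_plus_minus: "(x::ennreal) = min x (ennreal a) + (x - ennreal a)"
proof (cases "x \<le> ennreal a")
  case True
  then show ?thesis
    by (metis add.right_neutral diff_eq_0_ennreal ennreal_less_top min.absorb1 order.strict_trans1)
qed (simp add: min_def add_diff_inverse_ennreal)

lemma ennreal_mult_truncate_le:
  fixes G a c :: ennreal
  assumes "G \<le> 1"
  shows "G * a * c \<le> G * min a (ennreal \<alpha>) * min c (ennreal \<gamma>) + (a - ennreal \<alpha>) * c + a * (c - ennreal \<gamma>)"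
proof -
  have "G * a * c = G * (min a (ennreal \<alpha>) + (a - ennreal \<alpha>)) * (min c (ennreal \<gamma>) + (c - ennreal \<gamma>))"
    by (metis ennreal_min_plus_minus)
  also have "\<dots> = G * min a (ennreal \<alpha>) * min c (ennreal \<gamma>) + G * (a - ennreal \<alpha>) * c
      + G * min a (ennreal \<alpha>) * (c - ennreal \<gamma>)"
    by (subst (3) ennreal_min_plus_minus[of c \<gamma>]) (simp add: algebra_simps)
  also have "\<dots> \<le> G * min a (ennreal \<alpha>) * min c (ennreal \<gamma>) + (a - ennreal \<alpha>) * c + a * (c - ennreal \<gamma>)"
  proof (intro add_mono order.refl mult_right_mono)
    have G_le: "G * x \<le> x" for x
      using mult_right_mono[OF assms, of x] by simp
    show "G * (a - ennreal \<alpha>) \<le> a - ennreal \<alpha>"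
      by (rule G_le)
    show "G * min a (ennreal \<alpha>) \<le> a"
      using G_le[of "min a (ennreal \<alpha>)"] by (simp add: min.coboundedI1)
  qed simp_all
  finally show ?thesis .
qed

lemma enn2ereal_minus_le:
  "x \<le> y + ennreal d \<Longrightarrow> 0 \<le> d \<Longrightarrow> enn2ereal x - ereal d \<le> enn2ereal y"
  by (simp add: ereal_minus_le less_eq_ennreal.rep_eq plus_ennreal.rep_eq)

section \<open>Replacing one edge\<close>

lemma rect_integral_le_cut_norm:
  "A \<in> sets M \<Longrightarrow> B \<in> sets N \<Longrightarrow> \<bar>rect_integral M N h A B\<bar> \<le> cut_norm M N h"
  unfolding cut_norm_def by (rule SUP_upper2[where i="(A, B)"]) auto

lemma ennreal_le_add_of_balance:
  fixes F G P Q :: ennreal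
  assumes balance: "G + P = F + Q" and "Q \<noteq> \<top>"
    and close: "\<bar>enn2ereal P - enn2ereal Q\<bar> \<le> ereal d"
  shows "G \<le> F + ennreal d" "F \<le> G + ennreal d"
proof -
  obtain q where q: "Q = ennreal q" "0 \<le> q"
    using \<open>Q \<noteq> \<top>\<close> by (cases Q rule: ennreal_cases) auto
  moreover have "P \<noteq> \<top>"
    using close q by auto
  then obtain p where p: "P = ennreal p" "0 \<le> p"
    by (cases P rule: ennreal_cases) auto
  ultimately have pq: "p \<le> q + d" "q \<le> p + d"
    using close by auto
  have "P + G \<le> P + (F + ennreal d)"
  proof -
    have "P + G = F + Q"
      using balance by (simp add: ac_simps)
    also have "\<dots> \<le> F + (P + ennreal d)"
      using pq p q by (intro add_left_mono) (simp add: ennreal_plus[symmetric] del: ennreal_plus)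
    finally show ?thesis
      by (simp add: ac_simps)
  qed
  then show "G \<le> F + ennreal d"
    using p by (simp add: ennreal_add_left_cancel_le)
  have "Q + F \<le> Q + (G + ennreal d)"
  proof -
    have "Q + F = G + P"
      using balance by (simp add: ac_simps)
    also have "\<dots> \<le> G + (Q + ennreal d)"
      using pq p q by (intro add_left_mono) (simp add: ennreal_plus[symmetric] del: ennreal_plus)
    finally show ?thesis
      by (simp add: ac_simps)
  qed
  then show "F \<le> G + ennreal d"
    using q by (simp add: ennreal_add_left_cancel_le)
qed

lemma good_pair_rect_le:
  assumes "prob_space M" "prob_space N" "good_pair M N f g e"
    and [measurable]: "A \<in> sets M" "B \<in> sets N"
  defines "F \<equiv> \<integral>\<^sup>+x. \<integral>\<^sup>+y. ennreal (f x y) * indicator A x * indicator B y \<partial>N \<partial>M"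
    and "G \<equiv> \<integral>\<^sup>+x. \<integral>\<^sup>+y. ennreal (g x y) * indicator A x * indicator B y \<partial>N \<partial>M"
  shows "G \<le> F + ennreal (e ^ 4)" "F \<le> G + ennreal (e ^ 4)"
proof -
  interpret N: prob_space N by fact
  interpret MN: prob_space "M \<Otimes>\<^sub>M N" by (rule prob_space_pair) fact+
  have [measurable]: "case_prod f \<in> borel_measurable (M \<Otimes>\<^sub>M N)" "case_prod g \<in> borel_measurable (M \<Otimes>\<^sub>M N)"
    and bounds: "\<And>x y. x \<in> space M \<Longrightarrow> y \<in> space N \<Longrightarrow> 0 \<le> f x y \<and> 0 \<le> g x y \<and> g x y \<le> 1"
    and cut: "cut_norm M N (\<lambda>x y. f x y - g x y) \<le> ereal (e ^ 4)"
    using assms(3) unfolding good_pair_def by auto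
  define h where "h z = (f (fst z) (snd z) - g (fst z) (snd z)) * indicator A (fst z) * indicator B (snd z)" for z
  define P where "P = (\<integral>\<^sup>+z. ennreal (h z) \<partial>(M \<Otimes>\<^sub>M N))"
  define Q where "Q = (\<integral>\<^sup>+z. ennreal (- h z) \<partial>(M \<Otimes>\<^sub>M N))"
  have F_eq: "F = (\<integral>\<^sup>+z. ennreal (f (fst z) (snd z)) * indicator A (fst z) * indicator B (snd z) \<partial>(M \<Otimes>\<^sub>M N))"
    unfolding F_def by (rule N.nn_integral_fst[where f="\<lambda>z. _ (fst z) (snd z)", simplified]) measurable
  have G_eq: "G = (\<integral>\<^sup>+z. ennreal (g (fst z) (snd z)) * indicator A (fst z) * indicator B (snd z) \<partial>(M \<Otimes>\<^sub>M N))"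
    unfolding G_def by (rule N.nn_integral_fst[where f="\<lambda>z. _ (fst z) (snd z)", simplified]) measurable
  have "G + P = F + Q"
  proof -
    have "ennreal (g x y) * indicator A x * indicator B y + ennreal (h (x, y))
        = ennreal (f x y) * indicator A x * indicator B y + ennreal (- h (x, y))"
      if "x \<in> space M" "y \<in> space N" for x y
      using bounds[OF that]
      by (cases "f x y \<le> g x y") (auto simp: h_def ennreal_plus[symmetric] ennreal_neg split: split_indicator)
    then show ?thesis
      unfolding F_eq G_eq P_def Q_def h_def
      by (subst (1 2) nn_integral_add[symmetric]) (measurable, auto intro!: nn_integral_cong simp: space_pair_measure)
  qed
  moreover have "Q \<noteq> \<top>"
  proof -
    have "Q \<le> (\<integral>\<^sup>+z. 1 \<partial>(M \<Otimes>\<^sub>M N))"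
      unfolding Q_def h_def
      by (intro nn_integral_mono) (auto simp: space_pair_measure dest!: bounds split: split_indicator)
    then show ?thesis
      using MN.emeasure_space_1 by (auto simp: top_unique)
  qed
  moreover have "\<bar>enn2ereal P - enn2ereal Q\<bar> \<le> ereal (e ^ 4)"
  proof -
    have "rect_integral M N (\<lambda>x y. f x y - g x y) A B = enn2ereal P - enn2ereal Q"
      unfolding rect_integral_def P_def Q_def h_def by simp
    then show ?thesis
      using rect_integral_le_cut_norm[of A M B N "\<lambda>x y. f x y - g x y"] cut by simp
  qed
  ultimately show "G \<le> F + ennreal (e ^ 4)" "F \<le> G + ennreal (e ^ 4)"
    by (rule ennreal_le_add_of_balance)+
qed

lemma ennreal_layer_cake:
  assumes "0 \<le> r" "r \<le> \<alpha>"
  shows "ennreal r = (\<integral>\<^sup>+s. indicator {0..<\<alpha>} s * (if s < r then 1 else 0) \<partial>lborel)"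
proof -
  have "(\<integral>\<^sup>+s. indicator {0..<\<alpha>} s * (if s < r then 1 else 0) \<partial>lborel) = (\<integral>\<^sup>+s. indicator {0..<r} s \<partial>lborel)"
    using assms by (intro nn_integral_cong) (auto split: split_indicator)
  then show ?thesis
    using assms by simp
qed

lemma nn_integral_bilinear_layer_cake:
  fixes u :: "'a \<Rightarrow> real" and v :: "'b \<Rightarrow> real"
  assumes "sigma_finite_measure M" "sigma_finite_measure N"
    and [measurable]: "case_prod k \<in> borel_measurable (M \<Otimes>\<^sub>M N)" "u \<in> borel_measurable M" "v \<in> borel_measurable N"
    and u: "\<And>x. x \<in> space M \<Longrightarrow> 0 \<le> u x \<and> u x \<le> \<alpha>"
    and v: "\<And>y. y \<in> space N \<Longrightarrow> 0 \<le> v y \<and> v y \<le> \<beta>"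
  shows "(\<integral>\<^sup>+x. \<integral>\<^sup>+y. k x y * ennreal (u x) * ennreal (v y) \<partial>N \<partial>M)
    = (\<integral>\<^sup>+s. \<integral>\<^sup>+t. indicator {0..<\<alpha>} s * indicator {0..<\<beta>} t *
         (\<integral>\<^sup>+x. \<integral>\<^sup>+y. k x y * (if s < u x then 1 else 0) * (if t < v y then 1 else 0) \<partial>N \<partial>M) \<partial>lborel \<partial>lborel)"
proof -
  interpret M: sigma_finite_measure M by fact
  interpret N: sigma_finite_measure N by fact
  note L = lborel.sigma_finite_measure_axioms
  define K where "K x y s t = k x y * (indicator {0..<\<alpha>} s * (if s < u x then 1 else 0))
    * (indicator {0..<\<beta>} t * (if t < v y then 1 else 0))" for x y s t
  have "(\<integral>\<^sup>+x. \<integral>\<^sup>+y. k x y * ennreal (u x) * ennreal (v y) \<partial>N \<partial>M)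
      = (\<integral>\<^sup>+x. \<integral>\<^sup>+y. \<integral>\<^sup>+s. \<integral>\<^sup>+t. K x y s t \<partial>lborel \<partial>lborel \<partial>N \<partial>M)"
  proof (intro nn_integral_cong)
    fix x y assume "x \<in> space M" "y \<in> space N"
    then have "k x y * ennreal (u x) * ennreal (v y)
        = k x y * (\<integral>\<^sup>+s. indicator {0..<\<alpha>} s * (if s < u x then 1 else 0) \<partial>lborel)
            * (\<integral>\<^sup>+t. indicator {0..<\<beta>} t * (if t < v y then 1 else 0) \<partial>lborel)"
      using u v by (simp add: ennreal_layer_cake[symmetric])
    also have "\<dots> = (\<integral>\<^sup>+s. k x y * (indicator {0..<\<alpha>} s * (if s < u x then 1 else 0))
            * (\<integral>\<^sup>+t. indicator {0..<\<beta>} t * (if t < v y then 1 else 0) \<partial>lborel) \<partial>lborel)"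
      by (simp add: nn_integral_multc nn_integral_cmult)
    also have "\<dots> = (\<integral>\<^sup>+s. \<integral>\<^sup>+t. K x y s t \<partial>lborel \<partial>lborel)"
      unfolding K_def by (intro nn_integral_cong) (simp add: nn_integral_cmult)
    finally show "k x y * ennreal (u x) * ennreal (v y) = (\<integral>\<^sup>+s. \<integral>\<^sup>+t. K x y s t \<partial>lborel \<partial>lborel)" .
  qed
  also have "\<dots> = (\<integral>\<^sup>+x. \<integral>\<^sup>+s. \<integral>\<^sup>+y. \<integral>\<^sup>+t. K x y s t \<partial>lborel \<partial>N \<partial>lborel \<partial>M)"
    by (intro nn_integral_cong nn_integral_swap[OF N.sigma_finite_measure_axioms L]) (unfold K_def, measurable)
  also have "\<dots> = (\<integral>\<^sup>+x. \<integral>\<^sup>+s. \<integral>\<^sup>+t. \<integral>\<^sup>+y. K x y s t \<partial>N \<partial>lborel \<partial>lborel \<partial>M)"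
    by (intro nn_integral_cong nn_integral_swap[OF N.sigma_finite_measure_axioms L]) (unfold K_def, measurable)
  also have "\<dots> = (\<integral>\<^sup>+s. \<integral>\<^sup>+x. \<integral>\<^sup>+t. \<integral>\<^sup>+y. K x y s t \<partial>N \<partial>lborel \<partial>M \<partial>lborel)"
    by (intro nn_integral_swap[OF M.sigma_finite_measure_axioms L]) (unfold K_def, measurable)
  also have "\<dots> = (\<integral>\<^sup>+s. \<integral>\<^sup>+t. \<integral>\<^sup>+x. \<integral>\<^sup>+y. K x y s t \<partial>N \<partial>M \<partial>lborel \<partial>lborel)"
    by (intro nn_integral_cong nn_integral_swap[OF M.sigma_finite_measure_axioms L]) (unfold K_def, measurable)
  also have "\<dots> = (\<integral>\<^sup>+s. \<integral>\<^sup>+t. indicator {0..<\<alpha>} s * indicator {0..<\<beta>} t *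
         (\<integral>\<^sup>+x. \<integral>\<^sup>+y. k x y * (if s < u x then 1 else 0) * (if t < v y then 1 else 0) \<partial>N \<partial>M) \<partial>lborel \<partial>lborel)"
    unfolding K_def
    by (intro nn_integral_cong, subst nn_integral_cmult[symmetric], measurable,
        intro nn_integral_cong, subst nn_integral_cmult[symmetric], measurable, simp add: ac_simps)
  finally show ?thesis .
qed

lemma good_pair_bilinear_le:
  fixes u :: "'a \<Rightarrow> real" and v :: "'b \<Rightarrow> real"
  assumes "prob_space M" "prob_space N" "good_pair M N f g e"
    and [measurable]: "u \<in> borel_measurable M" "v \<in> borel_measurable N"
    and u: "\<And>x. x \<in> space M \<Longrightarrow> 0 \<le> u x \<and> u x \<le> \<alpha>"
    and v: "\<And>y. y \<in> space N \<Longrightarrow> 0 \<le> v y \<and> v y \<le> \<beta>"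
    and "0 \<le> \<alpha>" "0 \<le> \<beta>"
  shows "(\<integral>\<^sup>+x. \<integral>\<^sup>+y. ennreal (g x y) * ennreal (u x) * ennreal (v y) \<partial>N \<partial>M)
     \<le> (\<integral>\<^sup>+x. \<integral>\<^sup>+y. ennreal (f x y) * ennreal (u x) * ennreal (v y) \<partial>N \<partial>M) + ennreal (\<alpha> * \<beta> * e ^ 4)"
proof -
  have SM: "sigma_finite_measure M" and SN: "sigma_finite_measure N"
    using assms(1,2) by (simp_all add: prob_space_imp_sigma_finite)
  interpret M: sigma_finite_measure M by (fact SM)
  interpret N: sigma_finite_measure N by (fact SN)
  note [measurable] = good_pairD(1,2)[OF assms(3)]
  define W where "W s t = (indicator {0..<\<alpha>} s * indicator {0..<\<beta>} t :: ennreal)" for s t :: real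
  define I where "I h s t = (\<integral>\<^sup>+x. \<integral>\<^sup>+y. ennreal (h x y) * (if s < u x then 1 else 0) * (if t < v y then 1 else 0) \<partial>N \<partial>M)"
    for h :: "'a \<Rightarrow> 'b \<Rightarrow> real" and s t
  have [measurable]: "case_prod (I h) \<in> borel_measurable (lborel \<Otimes>\<^sub>M lborel)"
    if [measurable]: "case_prod h \<in> borel_measurable (M \<Otimes>\<^sub>M N)" for h
    unfolding I_def by measurable
  have layer_cake: "(\<integral>\<^sup>+x. \<integral>\<^sup>+y. ennreal (h x y) * ennreal (u x) * ennreal (v y) \<partial>N \<partial>M)
      = (\<integral>\<^sup>+s. \<integral>\<^sup>+t. W s t * I h s t \<partial>lborel \<partial>lborel)"
    if "case_prod h \<in> borel_measurable (M \<Otimes>\<^sub>M N)" for h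
    unfolding W_def I_def by (rule nn_integral_bilinear_layer_cake[OF SM SN _ _ _ u v]) (use that in measurable)
  have level_sets: "I g s t \<le> I f s t + ennreal (e ^ 4)" for s t
  proof -
    have [measurable]: "{x \<in> space M. s < u x} \<in> sets M" "{y \<in> space N. t < v y} \<in> sets N"
      by measurable
    have "I h s t = (\<integral>\<^sup>+x. \<integral>\<^sup>+y. ennreal (h x y) * indicator {x \<in> space M. s < u x} x
        * indicator {y \<in> space N. t < v y} y \<partial>N \<partial>M)" for h
      unfolding I_def by (intro nn_integral_cong) (auto split: split_indicator)
    then show ?thesis
      using good_pair_rect_le(1)[OF assms(1-3)] by simp
  qed
  have W_int: "(\<integral>\<^sup>+s. \<integral>\<^sup>+t. W s t \<partial>lborel \<partial>lborel) = ennreal (\<alpha> * \<beta>)"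
    using assms(8,9) by (simp add: W_def nn_integral_cmult nn_integral_multc ennreal_mult)
  have "(\<integral>\<^sup>+s. \<integral>\<^sup>+t. W s t * I g s t \<partial>lborel \<partial>lborel)
      \<le> (\<integral>\<^sup>+s. \<integral>\<^sup>+t. W s t * I f s t + W s t * ennreal (e ^ 4) \<partial>lborel \<partial>lborel)"
    using level_sets by (intro nn_integral_mono) (simp add: distrib_left[symmetric] mult_left_mono)
  also have "\<dots> = (\<integral>\<^sup>+s. \<integral>\<^sup>+t. W s t * I f s t \<partial>lborel \<partial>lborel)
      + (\<integral>\<^sup>+s. \<integral>\<^sup>+t. W s t \<partial>lborel \<partial>lborel) * ennreal (e ^ 4)"
    by (simp add: W_def nn_integral_add nn_integral_multc)
  finally show ?thesis
    using layer_cake[of f] layer_cake[of g] W_int assms(8,9)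
    by (simp add: ennreal_mult[symmetric] mult.assoc)
qed

lemma good_pair_product_le:
  fixes a :: "'v \<Rightarrow> ennreal" and c :: "'w \<Rightarrow> ennreal"
  assumes "prob_space V" "prob_space W" "good_pair V W f g e"
    and [measurable]: "a \<in> borel_measurable V" "c \<in> borel_measurable W"
    and "0 \<le> \<alpha>" "0 \<le> \<gamma>"
  shows "(\<integral>\<^sup>+v. \<integral>\<^sup>+w. ennreal (g v w) * a v * c w \<partial>W \<partial>V)
    \<le> (\<integral>\<^sup>+v. \<integral>\<^sup>+w. ennreal (f v w) * a v * c w \<partial>W \<partial>V) + ennreal (\<alpha> * \<gamma> * e ^ 4)
      + (\<integral>\<^sup>+v. a v - ennreal \<alpha> \<partial>V) * (\<integral>\<^sup>+w. c w \<partial>W)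
      + (\<integral>\<^sup>+v. a v \<partial>V) * (\<integral>\<^sup>+w. c w - ennreal \<gamma> \<partial>W)"
proof -
  interpret V: prob_space V by fact
  interpret W: prob_space W by fact
  note [measurable] = good_pairD(1,2)[OF assms(3)]
  note g_le = good_pairD(5)[OF assms(3)]
  define u where "u v = enn2real (min (a v) (ennreal \<alpha>))" for v
  define t where "t w = enn2real (min (c w) (ennreal \<gamma>))" for w
  have u: "ennreal (u v) = min (a v) (ennreal \<alpha>)" "0 \<le> u v \<and> u v \<le> \<alpha>" for v
    using assms(6) min.strict_coboundedI2[OF ennreal_less_top[of \<alpha>], of "a v"]
    by (auto simp: u_def enn2real_leI intro!: ennreal_enn2real)
  have t: "ennreal (t w) = min (c w) (ennreal \<gamma>)" "0 \<le> t w \<and> t w \<le> \<gamma>" for w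
    using assms(7) min.strict_coboundedI2[OF ennreal_less_top[of \<gamma>], of "c w"]
    by (auto simp: t_def enn2real_leI intro!: ennreal_enn2real)
  have [measurable]: "u \<in> borel_measurable V" "t \<in> borel_measurable W"
    unfolding u_def t_def by measurable measurable
  have "(\<integral>\<^sup>+v. \<integral>\<^sup>+w. ennreal (g v w) * a v * c w \<partial>W \<partial>V)
      \<le> (\<integral>\<^sup>+v. \<integral>\<^sup>+w. ennreal (g v w) * ennreal (u v) * ennreal (t w)
            + (a v - ennreal \<alpha>) * c w + a v * (c w - ennreal \<gamma>) \<partial>W \<partial>V)"
    unfolding u t using g_le by (intro nn_integral_mono ennreal_mult_truncate_le) simp
  also have "\<dots> = (\<integral>\<^sup>+v. (\<integral>\<^sup>+w. ennreal (g v w) * ennreal (u v) * ennreal (t w) \<partial>W)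
      + (a v - ennreal \<alpha>) * (\<integral>\<^sup>+w. c w \<partial>W) + a v * (\<integral>\<^sup>+w. c w - ennreal \<gamma> \<partial>W) \<partial>V)"
    by (intro nn_integral_cong, subst nn_integral_add3) (measurable, simp add: nn_integral_cmult)
  also have "\<dots> = (\<integral>\<^sup>+v. \<integral>\<^sup>+w. ennreal (g v w) * ennreal (u v) * ennreal (t w) \<partial>W \<partial>V)
      + (\<integral>\<^sup>+v. a v - ennreal \<alpha> \<partial>V) * (\<integral>\<^sup>+w. c w \<partial>W)
      + (\<integral>\<^sup>+v. a v \<partial>V) * (\<integral>\<^sup>+w. c w - ennreal \<gamma> \<partial>W)"
    by (subst nn_integral_add3) (measurable, simp add: nn_integral_multc)
  also have "(\<integral>\<^sup>+v. \<integral>\<^sup>+w. ennreal (g v w) * ennreal (u v) * ennreal (t w) \<partial>W \<partial>V)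
      \<le> (\<integral>\<^sup>+v. \<integral>\<^sup>+w. ennreal (f v w) * ennreal (u v) * ennreal (t w) \<partial>W \<partial>V) + ennreal (\<alpha> * \<gamma> * e ^ 4)"
    using u(2) t(2) by (intro good_pair_bilinear_le assms) (auto simp: u_def t_def)
  also have "(\<integral>\<^sup>+v. \<integral>\<^sup>+w. ennreal (f v w) * ennreal (u v) * ennreal (t w) \<partial>W \<partial>V)
      \<le> (\<integral>\<^sup>+v. \<integral>\<^sup>+w. ennreal (f v w) * a v * c w \<partial>W \<partial>V)"
    unfolding u t by (intro nn_integral_mono mult_mono) auto
  finally show ?thesis
    by (simp add: add_right_mono)
qed

lemma good_pair_truncation_le:
  fixes a :: "'y \<Rightarrow> 'v \<Rightarrow> ennreal" and c :: "'y \<Rightarrow> 'w \<Rightarrow> ennreal"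
  assumes "prob_space Y" "prob_space V" "prob_space W" "good_pair V W f g e"
    and [measurable]: "case_prod a \<in> borel_measurable (Y \<Otimes>\<^sub>M V)" "case_prod c \<in> borel_measurable (Y \<Otimes>\<^sub>M W)"
    and "0 \<le> \<alpha>" "0 \<le> \<gamma>"
  shows "(\<integral>\<^sup>+y. \<integral>\<^sup>+v. \<integral>\<^sup>+w. ennreal (g v w) * a y v * c y w \<partial>W \<partial>V \<partial>Y)
    \<le> (\<integral>\<^sup>+y. \<integral>\<^sup>+v. \<integral>\<^sup>+w. ennreal (f v w) * a y v * c y w \<partial>W \<partial>V \<partial>Y) + ennreal (\<alpha> * \<gamma> * e ^ 4)
      + (\<integral>\<^sup>+y. (\<integral>\<^sup>+v. a y v - ennreal \<alpha> \<partial>V) * (\<integral>\<^sup>+w. c y w \<partial>W) \<partial>Y)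
      + (\<integral>\<^sup>+y. (\<integral>\<^sup>+v. a y v \<partial>V) * (\<integral>\<^sup>+w. c y w - ennreal \<gamma> \<partial>W) \<partial>Y)"
proof -
  interpret Y: prob_space Y by fact
  interpret V: prob_space V by fact
  interpret W: prob_space W by fact
  note [measurable] = good_pairD(1)[OF assms(4)]
  have "(\<integral>\<^sup>+y. \<integral>\<^sup>+v. \<integral>\<^sup>+w. ennreal (g v w) * a y v * c y w \<partial>W \<partial>V \<partial>Y)
    \<le> (\<integral>\<^sup>+y. (\<integral>\<^sup>+v. \<integral>\<^sup>+w. ennreal (f v w) * a y v * c y w \<partial>W \<partial>V) + ennreal (\<alpha> * \<gamma> * e ^ 4)
      + (\<integral>\<^sup>+v. a y v - ennreal \<alpha> \<partial>V) * (\<integral>\<^sup>+w. c y w \<partial>W)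
      + (\<integral>\<^sup>+v. a y v \<partial>V) * (\<integral>\<^sup>+w. c y w - ennreal \<gamma> \<partial>W) \<partial>Y)"
    by (intro nn_integral_mono good_pair_product_le assms) measurable
  also have "\<dots> = (\<integral>\<^sup>+y. \<integral>\<^sup>+v. \<integral>\<^sup>+w. ennreal (f v w) * a y v * c y w \<partial>W \<partial>V \<partial>Y) + ennreal (\<alpha> * \<gamma> * e ^ 4)
      + (\<integral>\<^sup>+y. (\<integral>\<^sup>+v. a y v - ennreal \<alpha> \<partial>V) * (\<integral>\<^sup>+w. c y w \<partial>W) \<partial>Y)
      + (\<integral>\<^sup>+y. (\<integral>\<^sup>+v. a y v \<partial>V) * (\<integral>\<^sup>+w. c y w - ennreal \<gamma> \<partial>W) \<partial>Y)"
    by (subst nn_integral_add3, measurable, subst Y.nn_integral_add_const) measurable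
  finally show ?thesis .
qed

lemma good_pair_truncation_bounded_le:
  fixes a :: "'y \<Rightarrow> 'v \<Rightarrow> ennreal" and c :: "'y \<Rightarrow> 'w \<Rightarrow> ennreal"
  assumes "prob_space Y" "prob_space V" "prob_space W" "good_pair V W f g e"
    and [measurable]: "case_prod a \<in> borel_measurable (Y \<Otimes>\<^sub>M V)" "case_prod c \<in> borel_measurable (Y \<Otimes>\<^sub>M W)"
    and a_le: "\<And>y v. y \<in> space Y \<Longrightarrow> v \<in> space V \<Longrightarrow> a y v \<le> ennreal \<alpha>"
    and c_le: "\<And>y w. y \<in> space Y \<Longrightarrow> w \<in> space W \<Longrightarrow> c y w \<le> ennreal \<gamma>"
    and "0 \<le> \<alpha>" "0 \<le> \<gamma>"
  shows "(\<integral>\<^sup>+y. \<integral>\<^sup>+v. \<integral>\<^sup>+w. ennreal (g v w) * a y v * c y w \<partial>W \<partial>V \<partial>Y)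
    \<le> (\<integral>\<^sup>+y. \<integral>\<^sup>+v. \<integral>\<^sup>+w. ennreal (f v w) * a y v * c y w \<partial>W \<partial>V \<partial>Y) + ennreal (\<alpha> * \<gamma> * e ^ 4)"
proof -
  have "(\<integral>\<^sup>+y. (\<integral>\<^sup>+v. a y v - ennreal \<alpha> \<partial>V) * (\<integral>\<^sup>+w. c y w \<partial>W) \<partial>Y) = 0"
    "(\<integral>\<^sup>+y. (\<integral>\<^sup>+v. a y v \<partial>V) * (\<integral>\<^sup>+w. c y w - ennreal \<gamma> \<partial>W) \<partial>Y) = 0"
    using a_le c_le by (simp_all add: nn_integral_minus_const_eq_0 cong: nn_integral_cong)
  then show ?thesis
    using good_pair_truncation_le[OF assms(1-6,9,10)] by simp
qed

lemma good_pair_truncation_dominated_le: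
  fixes a :: "'y \<Rightarrow> 'v \<Rightarrow> ennreal" and c Q :: "'y \<Rightarrow> 'w \<Rightarrow> ennreal"
  assumes "prob_space Y" "prob_space V" "prob_space W" "good_pair V W f g e"
    and [measurable]: "case_prod a \<in> borel_measurable (Y \<Otimes>\<^sub>M V)" "case_prod c \<in> borel_measurable (Y \<Otimes>\<^sub>M W)"
      "case_prod Q \<in> borel_measurable (Y \<Otimes>\<^sub>M W)"
    and a_le: "\<And>y v. y \<in> space Y \<Longrightarrow> v \<in> space V \<Longrightarrow> a y v \<le> ennreal \<alpha>"
    and c_le: "\<And>y w. y \<in> space Y \<Longrightarrow> w \<in> space W \<Longrightarrow> c y w \<le> Q y w"
    and "0 \<le> \<alpha>" "0 < \<gamma>"
  shows "(\<integral>\<^sup>+y. \<integral>\<^sup>+v. \<integral>\<^sup>+w. ennreal (g v w) * a y v * c y w \<partial>W \<partial>V \<partial>Y)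
    \<le> (\<integral>\<^sup>+y. \<integral>\<^sup>+v. \<integral>\<^sup>+w. ennreal (f v w) * a y v * c y w \<partial>W \<partial>V \<partial>Y) + ennreal (\<alpha> * \<gamma> * e ^ 4)
      + ennreal (\<alpha> / (4 * \<gamma>)) * (\<integral>\<^sup>+y. \<integral>\<^sup>+w. (Q y w)\<^sup>2 \<partial>W \<partial>Y)"
proof -
  interpret V: prob_space V by fact
  interpret W: prob_space W by fact
  have "(\<integral>\<^sup>+y. (\<integral>\<^sup>+v. a y v - ennreal \<alpha> \<partial>V) * (\<integral>\<^sup>+w. c y w \<partial>W) \<partial>Y) = 0"
    using a_le by (simp add: nn_integral_minus_const_eq_0 cong: nn_integral_cong)
  moreover have "(\<integral>\<^sup>+y. (\<integral>\<^sup>+v. a y v \<partial>V) * (\<integral>\<^sup>+w. c y w - ennreal \<gamma> \<partial>W) \<partial>Y)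
      \<le> (\<integral>\<^sup>+y. ennreal \<alpha> * ((\<integral>\<^sup>+w. (Q y w)\<^sup>2 \<partial>W) * ennreal (1 / (4 * \<gamma>))) \<partial>Y)"
  proof (intro nn_integral_mono mult_mono)
    fix y assume "y \<in> space Y"
    show "(\<integral>\<^sup>+v. a y v \<partial>V) \<le> ennreal \<alpha>"
      using nn_integral_mono[of V "a y" "\<lambda>_. ennreal \<alpha>"] a_le[OF \<open>y \<in> space Y\<close>]
      by (simp add: V.emeasure_space_1)
    show "(\<integral>\<^sup>+w. c y w - ennreal \<gamma> \<partial>W) \<le> (\<integral>\<^sup>+w. (Q y w)\<^sup>2 \<partial>W) * ennreal (1 / (4 * \<gamma>))"
      using \<open>y \<in> space Y\<close> c_le assms(11) by (intro nn_integral_minus_const_le_sq) measurable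
  qed simp_all
  moreover have "(\<integral>\<^sup>+y. ennreal \<alpha> * ((\<integral>\<^sup>+w. (Q y w)\<^sup>2 \<partial>W) * ennreal (1 / (4 * \<gamma>))) \<partial>Y)
      = ennreal (\<alpha> / (4 * \<gamma>)) * (\<integral>\<^sup>+y. \<integral>\<^sup>+w. (Q y w)\<^sup>2 \<partial>W \<partial>Y)"
  proof -
    have "ennreal \<alpha> * (X * ennreal (1 / (4 * \<gamma>))) = ennreal (\<alpha> / (4 * \<gamma>)) * X" for X
    proof -
      have "ennreal \<alpha> * (X * ennreal (1 / (4 * \<gamma>))) = (ennreal \<alpha> * ennreal (1 / (4 * \<gamma>))) * X"
        by (simp only: ac_simps)
      also have "\<dots> = ennreal (\<alpha> / (4 * \<gamma>)) * X"
        using assms(10,11) by (simp add: ennreal_mult[symmetric])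
      finally show ?thesis .
    qed
    then show ?thesis
      by (simp only:) (rule nn_integral_cmult, measurable)
  qed
  ultimately show ?thesis
    using good_pair_truncation_le[OF assms(1-6), of \<alpha> \<gamma>] assms(10,11) by (auto elim!: order.trans intro: add_left_mono)
qed

section \<open>Integrals around a 5-cycle\<close>

lemma comp_sq_norm_eq:
  assumes "sigma_finite_measure M2" "sigma_finite_measure M3"
    and [measurable]: "case_prod h1 \<in> borel_measurable (M1 \<Otimes>\<^sub>M M2)" "case_prod h2 \<in> borel_measurable (M2 \<Otimes>\<^sub>M M3)"
    and "\<And>x y. x \<in> space M1 \<Longrightarrow> y \<in> space M2 \<Longrightarrow> 0 \<le> h1 x y"
    and "\<And>y z. y \<in> space M2 \<Longrightarrow> z \<in> space M3 \<Longrightarrow> 0 \<le> h2 y z"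
  shows "comp_sq_norm M1 M2 M3 h1 h2
    = (\<integral>\<^sup>+x. \<integral>\<^sup>+z. (\<integral>\<^sup>+y. ennreal (h1 x y) * ennreal (h2 y z) \<partial>M2)\<^sup>2 \<partial>M3 \<partial>M1)"
proof -
  interpret M2: sigma_finite_measure M2 by fact
  interpret M3: sigma_finite_measure M3 by fact
  have "comp_sq_norm M1 M2 M3 h1 h2 = (\<integral>\<^sup>+x. \<integral>\<^sup>+z. (\<integral>\<^sup>+y. ennreal (h1 x y * h2 y z) \<partial>M2)\<^sup>2 \<partial>M3 \<partial>M1)"
    unfolding comp_sq_norm_def
    by (rule M3.nn_integral_fst[where f="\<lambda>xz. (\<integral>\<^sup>+y. ennreal (h1 (fst xz) y * h2 y (snd xz)) \<partial>M2)\<^sup>2",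
          simplified, symmetric]) measurable
  also have "\<dots> = (\<integral>\<^sup>+x. \<integral>\<^sup>+z. (\<integral>\<^sup>+y. ennreal (h1 x y) * ennreal (h2 y z) \<partial>M2)\<^sup>2 \<partial>M3 \<partial>M1)"
    using assms(5,6) by (intro nn_integral_cong arg_cong[where f="\<lambda>x. x\<^sup>2"]) (simp add: ennreal_mult)
  finally show ?thesis .
qed

definition cycle_integral ::
  "'a measure \<Rightarrow> 'b measure \<Rightarrow> 'c measure \<Rightarrow> 'd measure \<Rightarrow> 'e measure \<Rightarrow>
   ('a \<Rightarrow> 'b \<Rightarrow> ennreal) \<Rightarrow> ('b \<Rightarrow> 'c \<Rightarrow> ennreal) \<Rightarrow> ('c \<Rightarrow> 'd \<Rightarrow> ennreal) \<Rightarrow>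
   ('d \<Rightarrow> 'e \<Rightarrow> ennreal) \<Rightarrow> ('e \<Rightarrow> 'a \<Rightarrow> ennreal) \<Rightarrow> ennreal" where
  "cycle_integral M1 M2 M3 M4 M5 p q r s t = (\<integral>\<^sup>+x1. \<integral>\<^sup>+x2. \<integral>\<^sup>+x3. \<integral>\<^sup>+x4. \<integral>\<^sup>+x5.
      p x1 x2 * q x2 x3 * r x3 x4 * s x4 x5 * t x5 x1 \<partial>M5 \<partial>M4 \<partial>M3 \<partial>M2 \<partial>M1)"

locale sigma_finite5 =
  M1: sigma_finite_measure M1 + M2: sigma_finite_measure M2 + M3: sigma_finite_measure M3 +
  M4: sigma_finite_measure M4 + M5: sigma_finite_measure M5
  for M1 :: "'a measure" and M2 :: "'b measure" and M3 :: "'c measure"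
    and M4 :: "'d measure" and M5 :: "'e measure"
begin

lemma cycle_integral_rotate:
  assumes [measurable]: "case_prod p \<in> borel_measurable (M1 \<Otimes>\<^sub>M M2)" "case_prod q \<in> borel_measurable (M2 \<Otimes>\<^sub>M M3)"
    "case_prod r \<in> borel_measurable (M3 \<Otimes>\<^sub>M M4)" "case_prod s \<in> borel_measurable (M4 \<Otimes>\<^sub>M M5)"
    "case_prod t \<in> borel_measurable (M5 \<Otimes>\<^sub>M M1)"
  shows "cycle_integral M1 M2 M3 M4 M5 p q r s t = cycle_integral M2 M3 M4 M5 M1 q r s t p"
proof -
  note swap = nn_integral_swap[OF M1.sigma_finite_measure_axioms]
  have "cycle_integral M1 M2 M3 M4 M5 p q r s t = (\<integral>\<^sup>+x2. \<integral>\<^sup>+x1. \<integral>\<^sup>+x3. \<integral>\<^sup>+x4. \<integral>\<^sup>+x5.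
      p x1 x2 * q x2 x3 * r x3 x4 * s x4 x5 * t x5 x1 \<partial>M5 \<partial>M4 \<partial>M3 \<partial>M1 \<partial>M2)"
    unfolding cycle_integral_def by (rule swap[OF M2.sigma_finite_measure_axioms]) measurable
  also have "\<dots> = (\<integral>\<^sup>+x2. \<integral>\<^sup>+x3. \<integral>\<^sup>+x1. \<integral>\<^sup>+x4. \<integral>\<^sup>+x5.
      p x1 x2 * q x2 x3 * r x3 x4 * s x4 x5 * t x5 x1 \<partial>M5 \<partial>M4 \<partial>M1 \<partial>M3 \<partial>M2)"
    by (intro nn_integral_cong swap[OF M3.sigma_finite_measure_axioms]) measurable
  also have "\<dots> = (\<integral>\<^sup>+x2. \<integral>\<^sup>+x3. \<integral>\<^sup>+x4. \<integral>\<^sup>+x1. \<integral>\<^sup>+x5.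
      p x1 x2 * q x2 x3 * r x3 x4 * s x4 x5 * t x5 x1 \<partial>M5 \<partial>M1 \<partial>M4 \<partial>M3 \<partial>M2)"
    by (intro nn_integral_cong swap[OF M4.sigma_finite_measure_axioms]) measurable
  also have "\<dots> = (\<integral>\<^sup>+x2. \<integral>\<^sup>+x3. \<integral>\<^sup>+x4. \<integral>\<^sup>+x5. \<integral>\<^sup>+x1.
      p x1 x2 * q x2 x3 * r x3 x4 * s x4 x5 * t x5 x1 \<partial>M1 \<partial>M5 \<partial>M4 \<partial>M3 \<partial>M2)"
    by (intro nn_integral_cong swap[OF M5.sigma_finite_measure_axioms]) measurable
  also have "\<dots> = cycle_integral M2 M3 M4 M5 M1 q r s t p"
    unfolding cycle_integral_def by (intro nn_integral_cong) (simp add: ac_simps)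
  finally show ?thesis .
qed

lemma cycle_integral_edge_form:
  assumes [measurable]: "case_prod p \<in> borel_measurable (M1 \<Otimes>\<^sub>M M2)" "case_prod q \<in> borel_measurable (M2 \<Otimes>\<^sub>M M3)"
    "case_prod r \<in> borel_measurable (M3 \<Otimes>\<^sub>M M4)" "case_prod s \<in> borel_measurable (M4 \<Otimes>\<^sub>M M5)"
    "case_prod t \<in> borel_measurable (M5 \<Otimes>\<^sub>M M1)"
  shows "cycle_integral M1 M2 M3 M4 M5 p q r s t = (\<integral>\<^sup>+x4. \<integral>\<^sup>+x1. \<integral>\<^sup>+x2.
     p x1 x2 * (\<integral>\<^sup>+x5. s x4 x5 * t x5 x1 \<partial>M5) * (\<integral>\<^sup>+x3. q x2 x3 * r x3 x4 \<partial>M3) \<partial>M2 \<partial>M1 \<partial>M4)"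
proof -
  define a where "a x4 x1 = (\<integral>\<^sup>+x5. s x4 x5 * t x5 x1 \<partial>M5)" for x4 x1
  have [measurable]: "case_prod a \<in> borel_measurable (M4 \<Otimes>\<^sub>M M1)"
    unfolding a_def by measurable
  note swap4 = nn_integral_swap[OF _ M4.sigma_finite_measure_axioms]
  have "cycle_integral M1 M2 M3 M4 M5 p q r s t = (\<integral>\<^sup>+x1. \<integral>\<^sup>+x2. \<integral>\<^sup>+x3. \<integral>\<^sup>+x4.
      p x1 x2 * q x2 x3 * r x3 x4 * a x4 x1 \<partial>M4 \<partial>M3 \<partial>M2 \<partial>M1)"
    unfolding cycle_integral_def a_def
    by (intro nn_integral_cong, subst nn_integral_cmult[symmetric]) (measurable, simp add: mult.assoc)
  also have "\<dots> = (\<integral>\<^sup>+x1. \<integral>\<^sup>+x2. \<integral>\<^sup>+x4. \<integral>\<^sup>+x3.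
      p x1 x2 * q x2 x3 * r x3 x4 * a x4 x1 \<partial>M3 \<partial>M4 \<partial>M2 \<partial>M1)"
    by (intro nn_integral_cong swap4[OF M3.sigma_finite_measure_axioms]) measurable
  also have "\<dots> = (\<integral>\<^sup>+x1. \<integral>\<^sup>+x4. \<integral>\<^sup>+x2. \<integral>\<^sup>+x3.
      p x1 x2 * q x2 x3 * r x3 x4 * a x4 x1 \<partial>M3 \<partial>M2 \<partial>M4 \<partial>M1)"
    by (intro nn_integral_cong swap4[OF M2.sigma_finite_measure_axioms]) measurable
  also have "\<dots> = (\<integral>\<^sup>+x4. \<integral>\<^sup>+x1. \<integral>\<^sup>+x2. \<integral>\<^sup>+x3.
      p x1 x2 * q x2 x3 * r x3 x4 * a x4 x1 \<partial>M3 \<partial>M2 \<partial>M1 \<partial>M4)"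
    by (intro swap4[OF M1.sigma_finite_measure_axioms]) measurable
  also have "\<dots> = (\<integral>\<^sup>+x4. \<integral>\<^sup>+x1. \<integral>\<^sup>+x2.
     p x1 x2 * a x4 x1 * (\<integral>\<^sup>+x3. q x2 x3 * r x3 x4 \<partial>M3) \<partial>M2 \<partial>M1 \<partial>M4)"
    by (intro nn_integral_cong, subst nn_integral_cmult[symmetric]) (measurable, simp add: ac_simps)
  finally show ?thesis
    unfolding a_def .
qed

end

section \<open>The counting lemma\<close>

locale pentagon_counting =
  M1: prob_space M1 + M2: prob_space M2 + M3: prob_space M3 + M4: prob_space M4 + M5: prob_space M5
  for M1 :: "'a measure" and M2 :: "'b measure" and M3 :: "'c measure"
    and M4 :: "'d measure" and M5 :: "'e measure" +
  fixes f12 g12 :: "'a \<Rightarrow> 'b \<Rightarrow> real" and f23 g23 :: "'b \<Rightarrow> 'c \<Rightarrow> real"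
    and f34 g34 :: "'c \<Rightarrow> 'd \<Rightarrow> real" and f45 g45 :: "'d \<Rightarrow> 'e \<Rightarrow> real"
    and f51 g51 :: "'e \<Rightarrow> 'a \<Rightarrow> real"
    and \<epsilon> C :: real
  assumes eps: "0 < \<epsilon>" "\<epsilon> < 1" and C: "1 \<le> C"
    and good12: "good_pair M1 M2 f12 g12 \<epsilon>" and good23: "good_pair M2 M3 f23 g23 \<epsilon>"
    and good34: "good_pair M3 M4 f34 g34 \<epsilon>" and good45: "good_pair M4 M5 f45 g45 \<epsilon>"
    and good51: "good_pair M5 M1 f51 g51 \<epsilon>"
    (* of the five composition bounds of the theorem, only these three are needed *)
    and comp234: "comp_sq_norm M2 M3 M4 f23 f34 \<le> ennreal C"
    and comp345: "comp_sq_norm M3 M4 M5 f34 f45 \<le> ennreal C"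
    and comp451: "comp_sq_norm M4 M5 M1 f45 f51 \<le> ennreal C"
begin

sublocale sigma_finite5 M1 M2 M3 M4 M5 ..
sublocale rot1: sigma_finite5 M2 M3 M4 M5 M1 ..
sublocale rot2: sigma_finite5 M3 M4 M5 M1 M2 ..
sublocale rot3: sigma_finite5 M4 M5 M1 M2 M3 ..
sublocale rot4: sigma_finite5 M5 M1 M2 M3 M4 ..

lemma eps_nonneg: "0 \<le> \<epsilon>" and eps_neq_0: "\<epsilon> \<noteq> 0"
  using eps by auto

lemmas measurable_kernels[measurable] =
  good_pairD(1,2)[OF good12] good_pairD(1,2)[OF good23] good_pairD(1,2)[OF good34]
  good_pairD(1,2)[OF good45] good_pairD(1,2)[OF good51]

lemmas f_nonneg = good_pairD(3)[OF good12] good_pairD(3)[OF good23] good_pairD(3)[OF good34]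
  good_pairD(3)[OF good45] good_pairD(3)[OF good51]

lemmas g_nonneg = good_pairD(4)[OF good12] good_pairD(4)[OF good23] good_pairD(4)[OF good34]
  good_pairD(4)[OF good45] good_pairD(4)[OF good51]

lemmas g_le_one = good_pairD(5)[OF good12] good_pairD(5)[OF good23] good_pairD(5)[OF good34]
  good_pairD(5)[OF good45] good_pairD(5)[OF good51]

definition "f45_o_f51 x4 x1 = (\<integral>\<^sup>+x5. ennreal (f45 x4 x5) * ennreal (f51 x5 x1) \<partial>M5)"
definition "f23_o_f34 x2 x4 = (\<integral>\<^sup>+x3. ennreal (f23 x2 x3) * ennreal (f34 x3 x4) \<partial>M3)"
definition "f34_o_f45 x3 x5 = (\<integral>\<^sup>+x4. ennreal (f34 x3 x4) * ennreal (f45 x4 x5) \<partial>M4)"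

lemma measurable_compositions[measurable]:
  "case_prod f45_o_f51 \<in> borel_measurable (M4 \<Otimes>\<^sub>M M1)"
  "case_prod f23_o_f34 \<in> borel_measurable (M2 \<Otimes>\<^sub>M M4)"
  "case_prod f34_o_f45 \<in> borel_measurable (M3 \<Otimes>\<^sub>M M5)"
  unfolding f45_o_f51_def f23_o_f34_def f34_o_f45_def by measurable

lemma f45_o_f51_sq_le: "(\<integral>\<^sup>+x4. \<integral>\<^sup>+x1. (f45_o_f51 x4 x1)\<^sup>2 \<partial>M1 \<partial>M4) \<le> ennreal C"
  using comp451 f_nonneg
  by (simp add: f45_o_f51_def comp_sq_norm_eq[OF M5.sigma_finite_measure_axioms M1.sigma_finite_measure_axioms])

lemma f45_o_f51_sq_le': "(\<integral>\<^sup>+x1. \<integral>\<^sup>+x4. (f45_o_f51 x4 x1)\<^sup>2 \<partial>M4 \<partial>M1) \<le> ennreal C"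
  using f45_o_f51_sq_le
  by (subst nn_integral_swap[OF M1.sigma_finite_measure_axioms M4.sigma_finite_measure_axioms]) simp_all

lemma f23_o_f34_sq_le: "(\<integral>\<^sup>+x4. \<integral>\<^sup>+x2. (f23_o_f34 x2 x4)\<^sup>2 \<partial>M2 \<partial>M4) \<le> ennreal C"
  using comp234 f_nonneg
  by (subst nn_integral_swap[OF M4.sigma_finite_measure_axioms M2.sigma_finite_measure_axioms])
     (simp_all add: f23_o_f34_def comp_sq_norm_eq[OF M3.sigma_finite_measure_axioms M4.sigma_finite_measure_axioms])

lemma f34_o_f45_sq_le: "(\<integral>\<^sup>+x5. \<integral>\<^sup>+x3. (f34_o_f45 x3 x5)\<^sup>2 \<partial>M3 \<partial>M5) \<le> ennreal C"
  using comp345 f_nonneg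
  by (subst nn_integral_swap[OF M5.sigma_finite_measure_axioms M3.sigma_finite_measure_axioms])
     (simp_all add: f34_o_f45_def comp_sq_norm_eq[OF M4.sigma_finite_measure_axioms M5.sigma_finite_measure_axioms])

(* On these sets, the weights met in the edge replacements below are bounded by powers of 1/eps. *)
definition "regular4 = {x4 \<in> space M4. (\<integral>\<^sup>+x1. (f45_o_f51 x4 x1)\<^sup>2 \<partial>M1) \<le> ennreal (1 / \<epsilon>)
  \<and> (\<integral>\<^sup>+x2. (f23_o_f34 x2 x4)\<^sup>2 \<partial>M2) \<le> ennreal (1 / \<epsilon>)}"

definition "regular5 = {x5 \<in> space M5. (\<integral>\<^sup>+x1. ennreal (f51 x5 x1) \<partial>M1) \<le> ennreal (1 / \<epsilon>)}"

lemma sets_regular[measurable]: "regular4 \<in> sets M4" "regular5 \<in> sets M5"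
  unfolding regular4_def regular5_def by measurable

lemma emeasure_irregular4: "emeasure M4 (space M4 - regular4) \<le> ennreal (2 * C * \<epsilon>)"
proof -
  have "emeasure M4 (space M4 - regular4)
      \<le> emeasure M4 {x4 \<in> space M4. \<not> (\<integral>\<^sup>+x1. (f45_o_f51 x4 x1)\<^sup>2 \<partial>M1) \<le> ennreal (1 / \<epsilon>)}
       + emeasure M4 {x4 \<in> space M4. \<not> (\<integral>\<^sup>+x2. (f23_o_f34 x2 x4)\<^sup>2 \<partial>M2) \<le> ennreal (1 / \<epsilon>)}"
    unfolding regular4_def
    by (intro order.trans[OF emeasure_mono emeasure_subadditive]) (auto, measurable)
  also have "\<dots> \<le> ennreal \<epsilon> * ennreal C + ennreal \<epsilon> * ennreal C"
    using eps(1) f45_o_f51_sq_le f23_o_f34_sq_le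
    by (intro add_mono order.trans[OF emeasure_exceeds_inverse_le] mult_left_mono) measurable
  also have "\<dots> = ennreal (2 * C * \<epsilon>)"
    using eps C by (simp add: ennreal_mult[symmetric] ennreal_plus[symmetric] del: ennreal_plus)
  finally show ?thesis .
qed

lemma f51_mass_le: "(\<integral>\<^sup>+x5. \<integral>\<^sup>+x1. ennreal (f51 x5 x1) \<partial>M1 \<partial>M5) \<le> ennreal (1 + \<epsilon> ^ 4)"
proof -
  have "(\<integral>\<^sup>+x5. \<integral>\<^sup>+x1. ennreal (f51 x5 x1) \<partial>M1 \<partial>M5)
      = (\<integral>\<^sup>+x5. \<integral>\<^sup>+x1. ennreal (f51 x5 x1) * indicator (space M5) x5 * indicator (space M1) x1 \<partial>M1 \<partial>M5)"
    by (intro nn_integral_cong) simp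
  also have "\<dots> \<le> (\<integral>\<^sup>+x5. \<integral>\<^sup>+x1. ennreal (g51 x5 x1) * indicator (space M5) x5 * indicator (space M1) x1 \<partial>M1 \<partial>M5)
      + ennreal (\<epsilon> ^ 4)"
    by (rule good_pair_rect_le(2)[OF M5.prob_space_axioms M1.prob_space_axioms good51]) auto
  also have "(\<integral>\<^sup>+x5. \<integral>\<^sup>+x1. ennreal (g51 x5 x1) * indicator (space M5) x5 * indicator (space M1) x1 \<partial>M1 \<partial>M5) \<le> 1"
    by (intro M5.nn_integral_le_one M1.nn_integral_le_one) (simp add: g_le_one)
  finally show ?thesis
    using eps by simp
qed

lemma emeasure_irregular5: "emeasure M5 (space M5 - regular5) \<le> ennreal (2 * \<epsilon>)"
proof -
  have "emeasure M5 (space M5 - regular5) \<le> ennreal \<epsilon> * (\<integral>\<^sup>+x5. \<integral>\<^sup>+x1. ennreal (f51 x5 x1) \<partial>M1 \<partial>M5)"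
  proof -
    have "space M5 - regular5 = {x5 \<in> space M5. \<not> (\<integral>\<^sup>+x1. ennreal (f51 x5 x1) \<partial>M1) \<le> ennreal (1 / \<epsilon>)}"
      unfolding regular5_def by auto
    then show ?thesis
      using eps(1) by (simp add: emeasure_exceeds_inverse_le)
  qed
  also have "\<dots> \<le> ennreal \<epsilon> * ennreal (1 + \<epsilon> ^ 4)"
    by (intro mult_left_mono f51_mass_le) simp
  also have "\<dots> \<le> ennreal (2 * \<epsilon>)"
  proof -
    have "\<epsilon> * (1 + \<epsilon> ^ 4) \<le> 2 * \<epsilon>"
      using eps power_le_one[of \<epsilon> 4] by (simp add: algebra_simps)
    moreover have "ennreal \<epsilon> * ennreal (1 + \<epsilon> ^ 4) = ennreal (\<epsilon> * (1 + \<epsilon> ^ 4))"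
      using eps by (intro ennreal_mult[symmetric]) auto
    ultimately show ?thesis
      by (simp add: ennreal_leI)
  qed
  finally show ?thesis .
qed

lemma regular4_L1:
  assumes "x4 \<in> regular4"
  shows "(\<integral>\<^sup>+x1. f45_o_f51 x4 x1 \<partial>M1) \<le> ennreal (sqrt (1 / \<epsilon>))"
    and "(\<integral>\<^sup>+x2. f23_o_f34 x2 x4 \<partial>M2) \<le> ennreal (sqrt (1 / \<epsilon>))"
  using assms eps(1) unfolding regular4_def
  by (auto intro!: M1.nn_integral_le_sqrt M2.nn_integral_le_sqrt)

definition "restricted_count h12 h23 h34 h45 h51 = cycle_integral M1 M2 M3 M4 M5
  (\<lambda>x1 x2. ennreal (h12 x1 x2)) (\<lambda>x2 x3. ennreal (h23 x2 x3)) (\<lambda>x3 x4. ennreal (h34 x3 x4))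
  (\<lambda>x4 x5. indicator regular4 x4 * ennreal (h45 x4 x5)) (\<lambda>x5 x1. indicator regular5 x5 * ennreal (h51 x5 x1))"

definition "restricted_f45_o_f51 x4 x1 =
  (\<integral>\<^sup>+x5. (indicator regular4 x4 * ennreal (f45 x4 x5)) * (indicator regular5 x5 * ennreal (f51 x5 x1)) \<partial>M5)"

definition "restricted_f51_o_g12 x5 x2 =
  (\<integral>\<^sup>+x1. (indicator regular5 x5 * ennreal (f51 x5 x1)) * ennreal (g12 x1 x2) \<partial>M1)"

lemma measurable_restricted[measurable]:
  "case_prod restricted_f45_o_f51 \<in> borel_measurable (M4 \<Otimes>\<^sub>M M1)"
  "case_prod restricted_f51_o_g12 \<in> borel_measurable (M5 \<Otimes>\<^sub>M M2)"
  unfolding restricted_f45_o_f51_def restricted_f51_o_g12_def by measurable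

lemma restricted_f45_o_f51_le:
  assumes "x4 \<in> space M4" "x1 \<in> space M1"
  shows "restricted_f45_o_f51 x4 x1 \<le> indicator regular4 x4 * f45_o_f51 x4 x1"
proof -
  have "restricted_f45_o_f51 x4 x1 \<le> (\<integral>\<^sup>+x5. indicator regular4 x4 * (ennreal (f45 x4 x5) * ennreal (f51 x5 x1)) \<partial>M5)"
    unfolding restricted_f45_o_f51_def by (intro nn_integral_mono) (auto split: split_indicator)
  also have "\<dots> = indicator regular4 x4 * f45_o_f51 x4 x1"
    unfolding f45_o_f51_def using assms by (intro nn_integral_cmult) measurable
  finally show ?thesis .
qed

lemma restricted_f51_o_g12_le:
  assumes "x5 \<in> space M5" "x2 \<in> space M2"
  shows "restricted_f51_o_g12 x5 x2 \<le> ennreal (1 / \<epsilon>)"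
proof -
  have "restricted_f51_o_g12 x5 x2 \<le> (\<integral>\<^sup>+x1. indicator regular5 x5 * ennreal (f51 x5 x1) \<partial>M1)"
    unfolding restricted_f51_o_g12_def using assms(2) g_le_one
    by (intro nn_integral_mono) (simp add: mult_left_le)
  also have "\<dots> = indicator regular5 x5 * (\<integral>\<^sup>+x1. ennreal (f51 x5 x1) \<partial>M1)"
    using assms(1) by (intro nn_integral_cmult) measurable
  also have "\<dots> \<le> ennreal (1 / \<epsilon>)"
    by (auto simp: regular5_def split: split_indicator)
  finally show ?thesis .
qed

lemma g_path_le_one:
  "x1 \<in> space M1 \<Longrightarrow> x3 \<in> space M3 \<Longrightarrow> (\<integral>\<^sup>+x2. ennreal (g12 x1 x2) * ennreal (g23 x2 x3) \<partial>M2) \<le> 1"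
  "x2 \<in> space M2 \<Longrightarrow> x4 \<in> space M4 \<Longrightarrow> (\<integral>\<^sup>+x3. ennreal (g23 x2 x3) * ennreal (g34 x3 x4) \<partial>M3) \<le> 1"
  "x3 \<in> space M3 \<Longrightarrow> x5 \<in> space M5 \<Longrightarrow>
    (\<integral>\<^sup>+x4. ennreal (g34 x3 x4) * (indicator regular4 x4 * ennreal (g45 x4 x5)) \<partial>M4) \<le> 1"
  by (auto intro!: M2.nn_integral_le_one M3.nn_integral_le_one M4.nn_integral_le_one mult_le_one
      simp: g_le_one split: split_indicator)

(* T balances the rectangle error T^2 eps^4 against the truncation errors, of size sqrt(1/eps)/T. *)
lemma replace12_threshold:
  defines "T \<equiv> sqrt (1 / \<epsilon>) / \<epsilon>"
  shows "0 < T" "T * T * \<epsilon> ^ 4 = \<epsilon>"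
    and "ennreal (1 / (4 * T)) * ennreal (sqrt (1 / \<epsilon>)) = ennreal (\<epsilon> / 4)"
proof -
  have s: "0 < sqrt (1 / \<epsilon>)" "sqrt (1 / \<epsilon>) * sqrt (1 / \<epsilon>) = 1 / \<epsilon>"
    using eps by simp_all
  show "0 < T"
    using eps s unfolding T_def by simp
  show "T * T * \<epsilon> ^ 4 = \<epsilon>"
    using eps s unfolding T_def by (simp add: field_simps power4_eq_xxxx)
  have "1 / (4 * T) * sqrt (1 / \<epsilon>) = \<epsilon> / 4"
    using eps s unfolding T_def by (simp add: field_simps)
  then show "ennreal (1 / (4 * T)) * ennreal (sqrt (1 / \<epsilon>)) = ennreal (\<epsilon> / 4)"
    using eps s \<open>0 < T\<close> by (simp add: ennreal_mult[symmetric])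
qed

lemma replace12_error1:
  defines "T \<equiv> sqrt (1 / \<epsilon>) / \<epsilon>"
  shows "(\<integral>\<^sup>+x4. (\<integral>\<^sup>+x1. restricted_f45_o_f51 x4 x1 - ennreal T \<partial>M1) * (\<integral>\<^sup>+x2. f23_o_f34 x2 x4 \<partial>M2) \<partial>M4)
    \<le> ennreal (C * \<epsilon> / 4)"
proof -
  note T = replace12_threshold[folded T_def]
  have "(\<integral>\<^sup>+x4. (\<integral>\<^sup>+x1. restricted_f45_o_f51 x4 x1 - ennreal T \<partial>M1) * (\<integral>\<^sup>+x2. f23_o_f34 x2 x4 \<partial>M2) \<partial>M4)
    \<le> (\<integral>\<^sup>+x4. (\<integral>\<^sup>+x1. (f45_o_f51 x4 x1)\<^sup>2 \<partial>M1) * ennreal (\<epsilon> / 4) \<partial>M4)"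
  proof (intro nn_integral_mono)
    fix x4 assume x4: "x4 \<in> space M4"
    show "(\<integral>\<^sup>+x1. restricted_f45_o_f51 x4 x1 - ennreal T \<partial>M1) * (\<integral>\<^sup>+x2. f23_o_f34 x2 x4 \<partial>M2)
        \<le> (\<integral>\<^sup>+x1. (f45_o_f51 x4 x1)\<^sup>2 \<partial>M1) * ennreal (\<epsilon> / 4)"
    proof (cases "x4 \<in> regular4")
      case True
      have "(\<integral>\<^sup>+x1. restricted_f45_o_f51 x4 x1 - ennreal T \<partial>M1) * (\<integral>\<^sup>+x2. f23_o_f34 x2 x4 \<partial>M2)
          \<le> ((\<integral>\<^sup>+x1. (f45_o_f51 x4 x1)\<^sup>2 \<partial>M1) * ennreal (1 / (4 * T))) * ennreal (sqrt (1 / \<epsilon>))"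
        using x4 True restricted_f45_o_f51_le[OF x4] regular4_L1(2)[OF True] T(1)
        by (intro mult_mono nn_integral_minus_const_le_sq) (auto, measurable)
      then show ?thesis
        using T(3) by (simp add: mult.assoc)
    next
      case False
      then have "(\<integral>\<^sup>+x1. restricted_f45_o_f51 x4 x1 - ennreal T \<partial>M1) = 0"
        using restricted_f45_o_f51_le[OF x4] by (intro nn_integral_minus_const_eq_0) simp
      then show ?thesis
        by simp
    qed
  qed
  also have "\<dots> = (\<integral>\<^sup>+x4. \<integral>\<^sup>+x1. (f45_o_f51 x4 x1)\<^sup>2 \<partial>M1 \<partial>M4) * ennreal (\<epsilon> / 4)"
    by (intro nn_integral_multc) measurable
  also have "\<dots> \<le> ennreal (C * \<epsilon> / 4)"
    using f45_o_f51_sq_le C eps by (auto simp: ennreal_mult[symmetric] intro: order.trans[OF mult_right_mono])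
  finally show ?thesis .
qed

lemma replace12_error2:
  defines "T \<equiv> sqrt (1 / \<epsilon>) / \<epsilon>"
  shows "(\<integral>\<^sup>+x4. (\<integral>\<^sup>+x1. restricted_f45_o_f51 x4 x1 \<partial>M1) * (\<integral>\<^sup>+x2. f23_o_f34 x2 x4 - ennreal T \<partial>M2) \<partial>M4)
    \<le> ennreal (C * \<epsilon> / 4)"
proof -
  note T = replace12_threshold[folded T_def]
  have "(\<integral>\<^sup>+x4. (\<integral>\<^sup>+x1. restricted_f45_o_f51 x4 x1 \<partial>M1) * (\<integral>\<^sup>+x2. f23_o_f34 x2 x4 - ennreal T \<partial>M2) \<partial>M4)
    \<le> (\<integral>\<^sup>+x4. (\<integral>\<^sup>+x2. (f23_o_f34 x2 x4)\<^sup>2 \<partial>M2) * ennreal (\<epsilon> / 4) \<partial>M4)"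
  proof (intro nn_integral_mono)
    fix x4 assume x4: "x4 \<in> space M4"
    show "(\<integral>\<^sup>+x1. restricted_f45_o_f51 x4 x1 \<partial>M1) * (\<integral>\<^sup>+x2. f23_o_f34 x2 x4 - ennreal T \<partial>M2)
        \<le> (\<integral>\<^sup>+x2. (f23_o_f34 x2 x4)\<^sup>2 \<partial>M2) * ennreal (\<epsilon> / 4)"
    proof (cases "x4 \<in> regular4")
      case True
      have "(\<integral>\<^sup>+x1. restricted_f45_o_f51 x4 x1 \<partial>M1) \<le> (\<integral>\<^sup>+x1. f45_o_f51 x4 x1 \<partial>M1)"
        using restricted_f45_o_f51_le[OF x4] True by (intro nn_integral_mono) simp
      then have "(\<integral>\<^sup>+x2. f23_o_f34 x2 x4 - ennreal T \<partial>M2) * (\<integral>\<^sup>+x1. restricted_f45_o_f51 x4 x1 \<partial>M1)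
          \<le> ((\<integral>\<^sup>+x2. (f23_o_f34 x2 x4)\<^sup>2 \<partial>M2) * ennreal (1 / (4 * T))) * ennreal (sqrt (1 / \<epsilon>))"
        using x4 regular4_L1(1)[OF True] T(1)
        by (intro mult_mono nn_integral_minus_const_le_sq) (auto, measurable)
      then have "(\<integral>\<^sup>+x2. f23_o_f34 x2 x4 - ennreal T \<partial>M2) * (\<integral>\<^sup>+x1. restricted_f45_o_f51 x4 x1 \<partial>M1)
          \<le> (\<integral>\<^sup>+x2. (f23_o_f34 x2 x4)\<^sup>2 \<partial>M2) * ennreal (\<epsilon> / 4)"
        using T(3) by (simp add: mult.assoc)
      then show ?thesis
        by (simp only: mult.commute)
    next
      case False
      then have "(\<integral>\<^sup>+x1. restricted_f45_o_f51 x4 x1 \<partial>M1) = 0"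
        using restricted_f45_o_f51_le[OF x4] nn_integral_mono[of M1 "restricted_f45_o_f51 x4" "\<lambda>_. 0"]
        by simp
      then show ?thesis
        by simp
    qed
  qed
  also have "\<dots> = (\<integral>\<^sup>+x4. \<integral>\<^sup>+x2. (f23_o_f34 x2 x4)\<^sup>2 \<partial>M2 \<partial>M4) * ennreal (\<epsilon> / 4)"
    by (intro nn_integral_multc) measurable
  also have "\<dots> \<le> ennreal (C * \<epsilon> / 4)"
    using f23_o_f34_sq_le C eps by (auto simp: ennreal_mult[symmetric] intro: order.trans[OF mult_right_mono])
  finally show ?thesis .
qed

lemma restricted_count_replace12:
  "restricted_count g12 f23 f34 f45 f51 \<le> restricted_count f12 f23 f34 f45 f51 + ennreal (\<epsilon> + C * \<epsilon> / 2)"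
proof -
  define T where "T = sqrt (1 / \<epsilon>) / \<epsilon>"
  note T = replace12_threshold[folded T_def]
  have edge_form: "restricted_count h f23 f34 f45 f51 = (\<integral>\<^sup>+x4. \<integral>\<^sup>+x1. \<integral>\<^sup>+x2.
      ennreal (h x1 x2) * restricted_f45_o_f51 x4 x1 * f23_o_f34 x2 x4 \<partial>M2 \<partial>M1 \<partial>M4)"
    if [measurable]: "case_prod h \<in> borel_measurable (M1 \<Otimes>\<^sub>M M2)" for h
    unfolding restricted_count_def restricted_f45_o_f51_def f23_o_f34_def
    by (rule cycle_integral_edge_form) measurable
  have "restricted_count g12 f23 f34 f45 f51 \<le> restricted_count f12 f23 f34 f45 f51 + ennreal (T * T * \<epsilon> ^ 4)
    + (\<integral>\<^sup>+x4. (\<integral>\<^sup>+x1. restricted_f45_o_f51 x4 x1 - ennreal T \<partial>M1) * (\<integral>\<^sup>+x2. f23_o_f34 x2 x4 \<partial>M2) \<partial>M4)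
    + (\<integral>\<^sup>+x4. (\<integral>\<^sup>+x1. restricted_f45_o_f51 x4 x1 \<partial>M1) * (\<integral>\<^sup>+x2. f23_o_f34 x2 x4 - ennreal T \<partial>M2) \<partial>M4)"
    unfolding edge_form[OF measurable_kernels(1)] edge_form[OF measurable_kernels(2)]
    by (intro good_pair_truncation_le M4.prob_space_axioms M1.prob_space_axioms M2.prob_space_axioms
        good12 less_imp_le[OF T(1)]) measurable
  also have "\<dots> \<le> restricted_count f12 f23 f34 f45 f51 + ennreal \<epsilon> + ennreal (C * \<epsilon> / 4) + ennreal (C * \<epsilon> / 4)"
    using replace12_error1[folded T_def] replace12_error2[folded T_def] by (intro add_mono) (simp_all add: T(2))
  also have "\<dots> = restricted_count f12 f23 f34 f45 f51 + ennreal (\<epsilon> + C * \<epsilon> / 2)"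
    using eps C by (simp add: add.assoc ennreal_plus[symmetric] del: ennreal_plus)
  finally show ?thesis .
qed

lemma restricted_count_replace23:
  "restricted_count g12 g23 f34 f45 f51 \<le> restricted_count g12 f23 f34 f45 f51 + ennreal (\<epsilon> + C * \<epsilon> / 4)"
proof -
  define c where "c x5 x3 = (\<integral>\<^sup>+x4. ennreal (f34 x3 x4) * (indicator regular4 x4 * ennreal (f45 x4 x5)) \<partial>M4)"
    for x5 x3
  have [measurable]: "case_prod c \<in> borel_measurable (M5 \<Otimes>\<^sub>M M3)"
    unfolding c_def by measurable
  have c_le: "c x5 x3 \<le> f34_o_f45 x3 x5" for x5 x3
    unfolding c_def f34_o_f45_def by (intro nn_integral_mono) (auto split: split_indicator)
  have edge_form: "restricted_count g12 h f34 f45 f51 = (\<integral>\<^sup>+x5. \<integral>\<^sup>+x2. \<integral>\<^sup>+x3.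
      ennreal (h x2 x3) * restricted_f51_o_g12 x5 x2 * c x5 x3 \<partial>M3 \<partial>M2 \<partial>M5)"
    if [measurable]: "case_prod h \<in> borel_measurable (M2 \<Otimes>\<^sub>M M3)" for h
    unfolding restricted_count_def restricted_f51_o_g12_def c_def
    by (subst cycle_integral_rotate, measurable, rule rot1.cycle_integral_edge_form, measurable)
  have "restricted_count g12 g23 f34 f45 f51 \<le> restricted_count g12 f23 f34 f45 f51
      + ennreal (1 / \<epsilon> * (1 / \<epsilon>\<^sup>2) * \<epsilon> ^ 4)
      + ennreal (1 / \<epsilon> / (4 * (1 / \<epsilon>\<^sup>2))) * (\<integral>\<^sup>+x5. \<integral>\<^sup>+x3. (f34_o_f45 x3 x5)\<^sup>2 \<partial>M3 \<partial>M5)"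
    unfolding edge_form[OF measurable_kernels(4)] edge_form[OF measurable_kernels(3)]
    by (intro good_pair_truncation_dominated_le M5.prob_space_axioms M2.prob_space_axioms M3.prob_space_axioms
        good23 restricted_f51_o_g12_le c_le) (measurable, auto simp: eps eps_nonneg eps_neq_0)
  also have "\<dots> \<le> restricted_count g12 f23 f34 f45 f51 + ennreal \<epsilon> + ennreal (\<epsilon> / 4) * ennreal C"
    using eps f34_o_f45_sq_le
    by (intro add_mono order.refl mult_mono) (simp_all add: field_simps power4_eq_xxxx power2_eq_square)
  also have "\<dots> = restricted_count g12 f23 f34 f45 f51 + ennreal (\<epsilon> + C * \<epsilon> / 4)"
    using eps C by (simp add: add.assoc ennreal_mult[symmetric] ennreal_plus[symmetric] del: ennreal_plus)
  finally show ?thesis .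
qed

lemma restricted_count_replace34:
  "restricted_count g12 g23 g34 f45 f51 \<le> restricted_count g12 g23 f34 f45 f51 + ennreal (\<epsilon>\<^sup>2 + C * \<epsilon>\<^sup>2 / 4)"
proof -
  have edge_form: "restricted_count g12 g23 h f45 f51 = (\<integral>\<^sup>+x1. \<integral>\<^sup>+x3. \<integral>\<^sup>+x4.
      ennreal (h x3 x4) * (\<integral>\<^sup>+x2. ennreal (g12 x1 x2) * ennreal (g23 x2 x3) \<partial>M2)
        * restricted_f45_o_f51 x4 x1 \<partial>M4 \<partial>M3 \<partial>M1)"
    if [measurable]: "case_prod h \<in> borel_measurable (M3 \<Otimes>\<^sub>M M4)" for h
    unfolding restricted_count_def restricted_f45_o_f51_def
    by (subst cycle_integral_rotate, measurable, subst rot1.cycle_integral_rotate, measurable,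
        rule rot2.cycle_integral_edge_form, measurable)
  have "restricted_count g12 g23 g34 f45 f51 \<le> restricted_count g12 g23 f34 f45 f51
      + ennreal (1 * (1 / \<epsilon>\<^sup>2) * \<epsilon> ^ 4)
      + ennreal (1 / (4 * (1 / \<epsilon>\<^sup>2))) * (\<integral>\<^sup>+x1. \<integral>\<^sup>+x4. (f45_o_f51 x4 x1)\<^sup>2 \<partial>M4 \<partial>M1)"
    unfolding edge_form[OF measurable_kernels(6)] edge_form[OF measurable_kernels(5)]
    by (intro good_pair_truncation_dominated_le M1.prob_space_axioms M3.prob_space_axioms M4.prob_space_axioms
        good34 order.trans[OF restricted_f45_o_f51_le]) (measurable, auto simp: eps eps_nonneg eps_neq_0 g_path_le_one split: split_indicator)
  also have "\<dots> \<le> restricted_count g12 g23 f34 f45 f51 + ennreal (\<epsilon>\<^sup>2) + ennreal (\<epsilon>\<^sup>2 / 4) * ennreal C"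
    using eps f45_o_f51_sq_le'
    by (intro add_mono order.refl mult_mono) (simp_all add: field_simps power4_eq_xxxx power2_eq_square)
  also have "\<dots> = restricted_count g12 g23 f34 f45 f51 + ennreal (\<epsilon>\<^sup>2 + C * \<epsilon>\<^sup>2 / 4)"
    using eps C by (simp add: add.assoc ennreal_mult[symmetric] ennreal_plus[symmetric] del: ennreal_plus)
  finally show ?thesis .
qed

lemma restricted_count_replace45:
  "restricted_count g12 g23 g34 g45 f51 \<le> restricted_count g12 g23 g34 f45 f51 + ennreal (\<epsilon> ^ 3)"
proof -
  define a where "a x2 x4 = indicator regular4 x4 * (\<integral>\<^sup>+x3. ennreal (g23 x2 x3) * ennreal (g34 x3 x4) \<partial>M3)"
    for x2 x4
  have [measurable]: "case_prod a \<in> borel_measurable (M2 \<Otimes>\<^sub>M M4)"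
    unfolding a_def by measurable
  have edge_form: "restricted_count g12 g23 g34 h f51 = (\<integral>\<^sup>+x2. \<integral>\<^sup>+x4. \<integral>\<^sup>+x5.
      ennreal (h x4 x5) * a x2 x4 * restricted_f51_o_g12 x5 x2 \<partial>M5 \<partial>M4 \<partial>M2)"
    if [measurable]: "case_prod h \<in> borel_measurable (M4 \<Otimes>\<^sub>M M5)" for h
  proof -
    have "restricted_count g12 g23 g34 h f51 = (\<integral>\<^sup>+x2. \<integral>\<^sup>+x4. \<integral>\<^sup>+x5.
        (indicator regular4 x4 * ennreal (h x4 x5)) * (\<integral>\<^sup>+x3. ennreal (g23 x2 x3) * ennreal (g34 x3 x4) \<partial>M3)
          * restricted_f51_o_g12 x5 x2 \<partial>M5 \<partial>M4 \<partial>M2)"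
      unfolding restricted_count_def restricted_f51_o_g12_def
      by (subst cycle_integral_rotate, measurable, subst rot1.cycle_integral_rotate, measurable,
          subst rot2.cycle_integral_rotate, measurable, rule rot3.cycle_integral_edge_form, measurable)
    then show ?thesis
      unfolding a_def by (simp add: ac_simps)
  qed
  have "restricted_count g12 g23 g34 g45 f51 \<le> restricted_count g12 g23 g34 f45 f51 + ennreal (1 * (1 / \<epsilon>) * \<epsilon> ^ 4)"
    unfolding edge_form[OF measurable_kernels(8)] edge_form[OF measurable_kernels(7)]
    by (intro good_pair_truncation_bounded_le M2.prob_space_axioms M4.prob_space_axioms M5.prob_space_axioms
        good45 restricted_f51_o_g12_le) (measurable, auto simp: eps eps_nonneg eps_neq_0 a_def g_path_le_one split: split_indicator)
  also have "1 * (1 / \<epsilon>) * \<epsilon> ^ 4 = \<epsilon> ^ 3"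
    using eps by (simp add: field_simps power3_eq_cube power4_eq_xxxx)
  finally show ?thesis .
qed

lemma restricted_count_replace51:
  "restricted_count g12 g23 g34 g45 g51 \<le> restricted_count g12 g23 g34 g45 f51 + ennreal (\<epsilon> ^ 4)"
proof -
  define a where "a x3 x5 = indicator regular5 x5
    * (\<integral>\<^sup>+x4. ennreal (g34 x3 x4) * (indicator regular4 x4 * ennreal (g45 x4 x5)) \<partial>M4)" for x3 x5
  have [measurable]: "case_prod a \<in> borel_measurable (M3 \<Otimes>\<^sub>M M5)"
    unfolding a_def by measurable
  have edge_form: "restricted_count g12 g23 g34 g45 h = (\<integral>\<^sup>+x3. \<integral>\<^sup>+x5. \<integral>\<^sup>+x1.
      ennreal (h x5 x1) * a x3 x5 * (\<integral>\<^sup>+x2. ennreal (g12 x1 x2) * ennreal (g23 x2 x3) \<partial>M2) \<partial>M1 \<partial>M5 \<partial>M3)"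
    if [measurable]: "case_prod h \<in> borel_measurable (M5 \<Otimes>\<^sub>M M1)" for h
  proof -
    have "restricted_count g12 g23 g34 g45 h = (\<integral>\<^sup>+x3. \<integral>\<^sup>+x5. \<integral>\<^sup>+x1.
        (indicator regular5 x5 * ennreal (h x5 x1))
          * (\<integral>\<^sup>+x4. ennreal (g34 x3 x4) * (indicator regular4 x4 * ennreal (g45 x4 x5)) \<partial>M4)
          * (\<integral>\<^sup>+x2. ennreal (g12 x1 x2) * ennreal (g23 x2 x3) \<partial>M2) \<partial>M1 \<partial>M5 \<partial>M3)"
      unfolding restricted_count_def
      by (subst cycle_integral_rotate, measurable, subst rot1.cycle_integral_rotate, measurable,
          subst rot2.cycle_integral_rotate, measurable, subst rot3.cycle_integral_rotate, measurable,
          rule rot4.cycle_integral_edge_form, measurable)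
    then show ?thesis
      unfolding a_def by (simp add: ac_simps)
  qed
  have "restricted_count g12 g23 g34 g45 g51 \<le> restricted_count g12 g23 g34 g45 f51 + ennreal (1 * 1 * \<epsilon> ^ 4)"
    unfolding edge_form[OF measurable_kernels(10)] edge_form[OF measurable_kernels(9)]
    by (intro good_pair_truncation_bounded_le M3.prob_space_axioms M5.prob_space_axioms M1.prob_space_axioms
        good51) (measurable, auto simp: a_def g_path_le_one split: split_indicator)
  then show ?thesis
    by simp
qed

lemma restricted_count_le_f_count:
  "restricted_count f12 f23 f34 f45 f51 \<le> (\<integral>\<^sup>+x1. \<integral>\<^sup>+x2. \<integral>\<^sup>+x3. \<integral>\<^sup>+x4. \<integral>\<^sup>+x5.
     ennreal (f12 x1 x2 * f23 x2 x3 * f34 x3 x4 * f45 x4 x5 * f51 x5 x1) \<partial>M5 \<partial>M4 \<partial>M3 \<partial>M2 \<partial>M1)"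
  unfolding restricted_count_def cycle_integral_def
proof (intro nn_integral_mono)
  fix x1 x2 x3 x4 x5
  assume "x1 \<in> space M1" "x2 \<in> space M2" "x3 \<in> space M3" "x4 \<in> space M4" "x5 \<in> space M5"
  then have "ennreal (f12 x1 x2 * f23 x2 x3 * f34 x3 x4 * f45 x4 x5 * f51 x5 x1)
      = ennreal (f12 x1 x2) * ennreal (f23 x2 x3) * ennreal (f34 x3 x4) * ennreal (f45 x4 x5) * ennreal (f51 x5 x1)"
    by (simp add: ennreal_mult f_nonneg)
  moreover have "ennreal (f12 x1 x2) * ennreal (f23 x2 x3) * ennreal (f34 x3 x4)
      * (indicator regular4 x4 * ennreal (f45 x4 x5)) * (indicator regular5 x5 * ennreal (f51 x5 x1))
    = (ennreal (f12 x1 x2) * ennreal (f23 x2 x3) * ennreal (f34 x3 x4) * ennreal (f45 x4 x5) * ennreal (f51 x5 x1))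
      * (indicator regular4 x4 * indicator regular5 x5)"
    by (simp only: ac_simps)
  moreover have "(indicator regular4 x4 * indicator regular5 x5 :: ennreal) \<le> 1"
    by (simp split: split_indicator)
  ultimately show "ennreal (f12 x1 x2) * ennreal (f23 x2 x3) * ennreal (f34 x3 x4)
      * (indicator regular4 x4 * ennreal (f45 x4 x5)) * (indicator regular5 x5 * ennreal (f51 x5 x1))
    \<le> ennreal (f12 x1 x2 * f23 x2 x3 * f34 x3 x4 * f45 x4 x5 * f51 x5 x1)"
    using mult_left_mono[of _ 1] by fastforce
qed

lemma g_product_le_restricted:
  assumes "x1 \<in> space M1" "x2 \<in> space M2" "x3 \<in> space M3" "x4 \<in> space M4" "x5 \<in> space M5"
  shows "ennreal (g12 x1 x2 * g23 x2 x3 * g34 x3 x4 * g45 x4 x5 * g51 x5 x1)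
    \<le> ennreal (g12 x1 x2) * ennreal (g23 x2 x3) * ennreal (g34 x3 x4)
        * (indicator regular4 x4 * ennreal (g45 x4 x5)) * (indicator regular5 x5 * ennreal (g51 x5 x1))
      + indicator (space M5 - regular5) x5 + indicator (space M4 - regular4) x4"
proof (cases "x4 \<in> regular4 \<and> x5 \<in> regular5")
  case True
  then show ?thesis
    using assms by (simp add: ennreal_mult g_nonneg ac_simps)
next
  case False
  have "ennreal (g12 x1 x2 * g23 x2 x3 * g34 x3 x4 * g45 x4 x5 * g51 x5 x1) \<le> 1"
    using assms by (simp add: mult_le_one g_nonneg g_le_one)
  also have "\<dots> \<le> indicator (space M5 - regular5) x5 + indicator (space M4 - regular4) x4"
    using False assms by (auto split: split_indicator)
  finally show ?thesis
    by (simp add: add.assoc add_increasing)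
qed

lemma g_count_le_restricted_count:
  "(\<integral>\<^sup>+x1. \<integral>\<^sup>+x2. \<integral>\<^sup>+x3. \<integral>\<^sup>+x4. \<integral>\<^sup>+x5.
     ennreal (g12 x1 x2 * g23 x2 x3 * g34 x3 x4 * g45 x4 x5 * g51 x5 x1) \<partial>M5 \<partial>M4 \<partial>M3 \<partial>M2 \<partial>M1)
   \<le> restricted_count g12 g23 g34 g45 g51 + emeasure M5 (space M5 - regular5) + emeasure M4 (space M4 - regular4)"
proof -
  define X where "X x1 x2 x3 x4 x5 = ennreal (g12 x1 x2) * ennreal (g23 x2 x3) * ennreal (g34 x3 x4)
    * (indicator regular4 x4 * ennreal (g45 x4 x5)) * (indicator regular5 x5 * ennreal (g51 x5 x1))"
    for x1 x2 x3 x4 x5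
  define m4 where "m4 = emeasure M4 (space M4 - regular4)"
  define m5 where "m5 = emeasure M5 (space M5 - regular5)"
  have "(\<integral>\<^sup>+x1. \<integral>\<^sup>+x2. \<integral>\<^sup>+x3. \<integral>\<^sup>+x4. \<integral>\<^sup>+x5.
     ennreal (g12 x1 x2 * g23 x2 x3 * g34 x3 x4 * g45 x4 x5 * g51 x5 x1) \<partial>M5 \<partial>M4 \<partial>M3 \<partial>M2 \<partial>M1)
    \<le> (\<integral>\<^sup>+x1. \<integral>\<^sup>+x2. \<integral>\<^sup>+x3. \<integral>\<^sup>+x4. \<integral>\<^sup>+x5. X x1 x2 x3 x4 x5
        + indicator (space M5 - regular5) x5 + indicator (space M4 - regular4) x4 \<partial>M5 \<partial>M4 \<partial>M3 \<partial>M2 \<partial>M1)"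
    unfolding X_def by (intro nn_integral_mono g_product_le_restricted)
  also have "\<dots> = (\<integral>\<^sup>+x1. \<integral>\<^sup>+x2. \<integral>\<^sup>+x3. \<integral>\<^sup>+x4.
      (\<integral>\<^sup>+x5. X x1 x2 x3 x4 x5 \<partial>M5) + indicator (space M4 - regular4) x4 + m5 \<partial>M4 \<partial>M3 \<partial>M2 \<partial>M1)"
    unfolding m5_def X_def
    by (intro nn_integral_cong, subst M5.nn_integral_add_indicator_const) measurable
  also have "\<dots> = (\<integral>\<^sup>+x1. \<integral>\<^sup>+x2. \<integral>\<^sup>+x3.
      (\<integral>\<^sup>+x4. \<integral>\<^sup>+x5. X x1 x2 x3 x4 x5 \<partial>M5 \<partial>M4) + m4 + m5 \<partial>M3 \<partial>M2 \<partial>M1)"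
    unfolding m4_def X_def by (intro nn_integral_cong M4.nn_integral_add_indicator_const) measurable
  also have "\<dots> = (\<integral>\<^sup>+x1. \<integral>\<^sup>+x2.
      (\<integral>\<^sup>+x3. \<integral>\<^sup>+x4. \<integral>\<^sup>+x5. X x1 x2 x3 x4 x5 \<partial>M5 \<partial>M4 \<partial>M3) + (m4 + m5) \<partial>M2 \<partial>M1)"
    unfolding X_def add.assoc by (intro nn_integral_cong M3.nn_integral_add_const) measurable
  also have "\<dots> = (\<integral>\<^sup>+x1.
      (\<integral>\<^sup>+x2. \<integral>\<^sup>+x3. \<integral>\<^sup>+x4. \<integral>\<^sup>+x5. X x1 x2 x3 x4 x5 \<partial>M5 \<partial>M4 \<partial>M3 \<partial>M2) + (m4 + m5) \<partial>M1)"
    unfolding X_def by (intro nn_integral_cong M2.nn_integral_add_const) measurable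
  also have "\<dots> = restricted_count g12 g23 g34 g45 g51 + (m4 + m5)"
    unfolding X_def restricted_count_def cycle_integral_def by (intro M1.nn_integral_add_const) measurable
  finally show ?thesis
    unfolding restricted_count_def m4_def m5_def by (simp add: ac_simps)
qed

lemma error_sum_le:
  "(\<epsilon> + C * \<epsilon> / 2) + (\<epsilon> + C * \<epsilon> / 4) + (\<epsilon>\<^sup>2 + C * \<epsilon>\<^sup>2 / 4) + \<epsilon> ^ 3 + \<epsilon> ^ 4
    + 2 * \<epsilon> + 2 * C * \<epsilon> \<le> 11 * C * \<epsilon>"
proof -
  have "\<epsilon> ^ 4 \<le> \<epsilon>" "\<epsilon> ^ 3 \<le> \<epsilon>" "\<epsilon>\<^sup>2 \<le> \<epsilon>"
    using eps power_decreasing[of 1 4 \<epsilon>] power_decreasing[of 1 3 \<epsilon>] power_decreasing[of 1 2 \<epsilon>]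
    by simp_all
  moreover have "0 \<le> C * \<epsilon>" "\<epsilon> \<le> C * \<epsilon>" "C * \<epsilon>\<^sup>2 \<le> C * \<epsilon>"
    using eps C \<open>\<epsilon>\<^sup>2 \<le> \<epsilon>\<close> by simp_all
  moreover have "2 * C * \<epsilon> = 2 * (C * \<epsilon>)" "11 * C * \<epsilon> = 11 * (C * \<epsilon>)"
    by simp_all
  ultimately show ?thesis
    by linarith
qed

lemma g_count_le_f_count:
  "(\<integral>\<^sup>+x1. \<integral>\<^sup>+x2. \<integral>\<^sup>+x3. \<integral>\<^sup>+x4. \<integral>\<^sup>+x5.
     ennreal (g12 x1 x2 * g23 x2 x3 * g34 x3 x4 * g45 x4 x5 * g51 x5 x1) \<partial>M5 \<partial>M4 \<partial>M3 \<partial>M2 \<partial>M1)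
   \<le> (\<integral>\<^sup>+x1. \<integral>\<^sup>+x2. \<integral>\<^sup>+x3. \<integral>\<^sup>+x4. \<integral>\<^sup>+x5.
     ennreal (f12 x1 x2 * f23 x2 x3 * f34 x3 x4 * f45 x4 x5 * f51 x5 x1) \<partial>M5 \<partial>M4 \<partial>M3 \<partial>M2 \<partial>M1)
     + ennreal (11 * C * \<epsilon>)"
    (is "?G \<le> ?F + _")
proof -
  have "?G \<le> restricted_count g12 g23 g34 g45 g51 + ennreal (2 * \<epsilon>) + ennreal (2 * C * \<epsilon>)"
    using g_count_le_restricted_count emeasure_irregular5 emeasure_irregular4
    by (auto intro: order.trans add_mono)
  also have "restricted_count g12 g23 g34 g45 g51 \<le> restricted_count g12 g23 g34 g45 f51 + ennreal (\<epsilon> ^ 4)"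
    by (rule restricted_count_replace51)
  also have "restricted_count g12 g23 g34 g45 f51 \<le> restricted_count g12 g23 g34 f45 f51 + ennreal (\<epsilon> ^ 3)"
    by (rule restricted_count_replace45)
  also have "restricted_count g12 g23 g34 f45 f51 \<le> restricted_count g12 g23 f34 f45 f51 + ennreal (\<epsilon>\<^sup>2 + C * \<epsilon>\<^sup>2 / 4)"
    by (rule restricted_count_replace34)
  also have "restricted_count g12 g23 f34 f45 f51 \<le> restricted_count g12 f23 f34 f45 f51 + ennreal (\<epsilon> + C * \<epsilon> / 4)"
    by (rule restricted_count_replace23)
  also have "restricted_count g12 f23 f34 f45 f51 \<le> restricted_count f12 f23 f34 f45 f51 + ennreal (\<epsilon> + C * \<epsilon> / 2)"
    by (rule restricted_count_replace12)
  also have "restricted_count f12 f23 f34 f45 f51 \<le> ?F"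
    by (rule restricted_count_le_f_count)
  finally have "?G \<le> ?F + ennreal (\<epsilon> + C * \<epsilon> / 2) + ennreal (\<epsilon> + C * \<epsilon> / 4) + ennreal (\<epsilon>\<^sup>2 + C * \<epsilon>\<^sup>2 / 4)
      + ennreal (\<epsilon> ^ 3) + ennreal (\<epsilon> ^ 4) + ennreal (2 * \<epsilon>) + ennreal (2 * C * \<epsilon>)"
    by (simp add: add_mono add_right_mono)
  also have "\<dots> = ?F + ennreal ((\<epsilon> + C * \<epsilon> / 2) + (\<epsilon> + C * \<epsilon> / 4) + (\<epsilon>\<^sup>2 + C * \<epsilon>\<^sup>2 / 4)
      + \<epsilon> ^ 3 + \<epsilon> ^ 4 + 2 * \<epsilon> + 2 * C * \<epsilon>)"
    using eps C by (simp add: add.assoc ennreal_plus[symmetric] del: ennreal_plus)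
  also have "\<dots> \<le> ?F + ennreal (11 * C * \<epsilon>)"
    by (intro add_left_mono ennreal_leI error_sum_le)
  finally show ?thesis .
qed

end

theorem theorem3p2:
  fixes M1 :: "'a measure" and M2 :: "'b measure" and M3 :: "'c measure"
    and M4 :: "'d measure" and M5 :: "'e measure"
    and f12 g12 :: "'a \<Rightarrow> 'b \<Rightarrow> real" and f23 g23 :: "'b \<Rightarrow> 'c \<Rightarrow> real"
    and f34 g34 :: "'c \<Rightarrow> 'd \<Rightarrow> real" and f45 g45 :: "'d \<Rightarrow> 'e \<Rightarrow> real"
    and f51 g51 :: "'e \<Rightarrow> 'a \<Rightarrow> real"
    and \<epsilon> C :: real
  assumes "0 < \<epsilon>" "\<epsilon> < 1" "1 \<le> C"
    and "prob_space M1" "prob_space M2" "prob_space M3" "prob_space M4" "prob_space M5"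
    and "good_pair M1 M2 f12 g12 \<epsilon>" "good_pair M2 M3 f23 g23 \<epsilon>"
    and "good_pair M3 M4 f34 g34 \<epsilon>" "good_pair M4 M5 f45 g45 \<epsilon>"
    and "good_pair M5 M1 f51 g51 \<epsilon>"
    and "comp_sq_norm M5 M1 M2 f51 f12 \<le> ennreal C"
    and "comp_sq_norm M1 M2 M3 f12 f23 \<le> ennreal C"
    and "comp_sq_norm M2 M3 M4 f23 f34 \<le> ennreal C"
    and "comp_sq_norm M3 M4 M5 f34 f45 \<le> ennreal C"
    and "comp_sq_norm M4 M5 M1 f45 f51 \<le> ennreal C"
  shows "enn2ereal (\<integral>\<^sup>+ x1. \<integral>\<^sup>+ x2. \<integral>\<^sup>+ x3. \<integral>\<^sup>+ x4. \<integral>\<^sup>+ x5.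
            ennreal (g12 x1 x2 * g23 x2 x3 * g34 x3 x4 * g45 x4 x5 * g51 x5 x1)
            \<partial>M5 \<partial>M4 \<partial>M3 \<partial>M2 \<partial>M1) - ereal (11 * C * \<epsilon>)
         \<le> enn2ereal (\<integral>\<^sup>+ x1. \<integral>\<^sup>+ x2. \<integral>\<^sup>+ x3. \<integral>\<^sup>+ x4. \<integral>\<^sup>+ x5.
            ennreal (f12 x1 x2 * f23 x2 x3 * f34 x3 x4 * f45 x4 x5 * f51 x5 x1)
            \<partial>M5 \<partial>M4 \<partial>M3 \<partial>M2 \<partial>M1)"
proof -
  interpret pentagon_counting M1 M2 M3 M4 M5 f12 g12 f23 g23 f34 g34 f45 g45 f51 g51 \<epsilon> C
    using assms by (simp add: pentagon_counting_def pentagon_counting_axioms_def)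
  show ?thesis
    using g_count_le_f_count \<open>0 < \<epsilon>\<close> \<open>1 \<le> C\<close> by (intro enn2ereal_minus_le) simp_all
qed

end
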